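(* Let $\Delta$ be a Cohen-Macaulay simplicial forest and $R=\mathbb{K}[x_i\mid x_i\in V(\Delta)]$ the polynomial ring over a field $\mathbb{K}$. Then for each $1\le k\le\nu(\Delta)$, \[\dim(R/I(\Delta)^{[k]})=|V(\Delta)|-\nu(\Delta)+k-1.\]
   Context: A simplicial complex $\Delta$ on a finite vertex set $V(\Delta)$ is a family of subsets closed under taking subsets; its facets are the maximal faces, $\mathcal{F}(\Delta)$ denotes the set of facets. A subcomplex of $\Delta$ means a simplicial complex $\Delta'$ with $\mathcal{F}(\Delta')\subseteq\mathcal{F}(\Delta)$. A facet $F$ is a leaf of $\Delta$ if either $F$ is the only facet of $\Delta$, or there is a facet $G\neq F$ with $F\cap H\subseteq F\cap G$ for all facets $H\neq F$. $\Delta$ is a simplicial tree if it is connected and every nonempty subcomplex has a leaf; a simplicial forest is a simplicial complex each of whose connected components is a simplicial tree. A matching of $\Delta$ is a set of pairwise disjoint facets; $\nu(\Delta)$ is the maximum size of a matching. For $S\subseteq V(\Delta)$, $\mathbf{x}_S=\prod_{x_i\in S}x_i$. The facet ideal is $I(\Delta)=\langle \mathbf{x}_F\mid F\in\mathcal{F}(\Delta)\rangle\subseteq R$. For a square-free monomial ideal $I$, $I^{[k]}$ is the ideal generated by the square-free monomials in $I^k$. A Cohen-Macaulay simplicial forest is a simplicial forest $\Delta$ such that $R/I(\Delta)$ is Cohen-Macaulay. *)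

theory Defs
  imports "HOL-Algebra.QuotRing" "HOL-Algebra.Ideal_Product"
          "HOL-Library.Poly_Mapping" "HOL-Library.Extended_Nat"
begin

text \<open>A simplicial complex is represented by its (finite) set of facets:
  finite, nonempty, pairwise incomparable vertex sets.\<close>

definition facet_set :: "'v set set \<Rightarrow> bool" where
  "facet_set Fs \<longleftrightarrow> finite Fs \<and> (\<forall>F\<in>Fs. finite F \<and> F \<noteq> {})
      \<and> (\<forall>F\<in>Fs. \<forall>G\<in>Fs. F \<subseteq> G \<longrightarrow> F = G)"

definition vertices :: "'v set set \<Rightarrow> 'v set" where
  "vertices Fs = \<Union>Fs"

definition is_leaf :: "'v set set \<Rightarrow> 'v set \<Rightarrow> bool" where
  "is_leaf Fs F \<longleftrightarrow> F \<in> Fs \<and>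
     (Fs = {F} \<or> (\<exists>G\<in>Fs. G \<noteq> F \<and> (\<forall>H\<in>Fs. H \<noteq> F \<longrightarrow> F \<inter> H \<subseteq> F \<inter> G)))"

definition cx_connected :: "'v set set \<Rightarrow> bool" where
  "cx_connected Fs \<longleftrightarrow> (\<forall>F\<in>Fs. \<forall>G\<in>Fs.
     (F, G) \<in> rtrancl {(A, B). A \<in> Fs \<and> B \<in> Fs \<and> A \<inter> B \<noteq> {}})"

text \<open>Subcomplexes are given by subsets of the facet set.\<close>

definition simplicial_tree :: "'v set set \<Rightarrow> bool" where
  "simplicial_tree Fs \<longleftrightarrow> Fs \<noteq> {} \<and> cx_connected Fs \<and>
     (\<forall>Gs. Gs \<subseteq> Fs \<and> Gs \<noteq> {} \<longrightarrow> (\<exists>F. is_leaf Gs F))"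

definition cx_component :: "'v set set \<Rightarrow> 'v set set \<Rightarrow> bool" where
  "cx_component Fs C \<longleftrightarrow> C \<noteq> {} \<and> C \<subseteq> Fs \<and> cx_connected C \<and>
     (\<forall>F\<in>Fs - C. \<forall>G\<in>C. F \<inter> G = {})"

definition simplicial_forest :: "'v set set \<Rightarrow> bool" where
  "simplicial_forest Fs \<longleftrightarrow> (\<forall>C. cx_component Fs C \<longrightarrow> simplicial_tree C)"

definition matching_number :: "'v set set \<Rightarrow> nat" where
  "matching_number Fs = Max {card M | M. M \<subseteq> Fs \<and> pairwise disjnt M}"

type_synonym ('v, 'k) mpoly = "('v \<Rightarrow>\<^sub>0 nat) \<Rightarrow>\<^sub>0 'k"

definition poly_ring :: "'v set \<Rightarrow> ('v, 'k::field) mpoly ring" where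
  "poly_ring V = \<lparr> carrier = {p. \<forall>m\<in>Poly_Mapping.keys p. Poly_Mapping.keys m \<subseteq> V},
                   monoid.mult = (*), one = 1, zero = 0, add = (+) \<rparr>"

definition var :: "'v \<Rightarrow> ('v, 'k::field) mpoly" where
  "var v = Poly_Mapping.single (Poly_Mapping.single v 1) 1"

definition xmon :: "'v set \<Rightarrow> ('v, 'k::field) mpoly" where
  "xmon S = (\<Prod>v\<in>S. var v)"

definition facet_ideal :: "('v, 'k::field) mpoly ring \<Rightarrow> 'v set set \<Rightarrow> ('v, 'k) mpoly set" where
  "facet_ideal R Fs = genideal R (xmon ` Fs)"

primrec ideal_pow :: "('a, 'b) ring_scheme \<Rightarrow> 'a set \<Rightarrow> nat \<Rightarrow> 'a set" where
  "ideal_pow R I 0 = carrier R"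
| "ideal_pow R I (Suc k) = ideal_prod R I (ideal_pow R I k)"

definition sqfree_pow :: "('v, 'k::field) mpoly ring \<Rightarrow> 'v set \<Rightarrow> ('v, 'k) mpoly set \<Rightarrow> nat
    \<Rightarrow> ('v, 'k) mpoly set" where
  "sqfree_pow R V I k = genideal R {xmon S | S. finite S \<and> S \<subseteq> V \<and> xmon S \<in> ideal_pow R I k}"

definition krull_dim :: "('a, 'b) ring_scheme \<Rightarrow> enat" where
  "krull_dim A = (SUP n \<in> {n. \<exists>P. (\<forall>i\<le>n. primeideal (P i) A) \<and> (\<forall>i<n. P i \<subset> P (Suc i))}. enat n)"

definition regular_seq :: "('a, 'b) ring_scheme \<Rightarrow> 'a set \<Rightarrow> 'a list \<Rightarrow> bool" where
  "regular_seq A J fs \<longleftrightarrow> set fs \<subseteq> J \<and> genideal A (set fs) \<noteq> carrier A \<and>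
     (\<forall>i<length fs. \<forall>a\<in>carrier A.
        fs ! i \<otimes>\<^bsub>A\<^esub> a \<in> genideal A (set (take i fs)) \<longrightarrow> a \<in> genideal A (set (take i fs)))"

definition depth :: "('a, 'b) ring_scheme \<Rightarrow> 'a set \<Rightarrow> enat" where
  "depth A J = (SUP fs \<in> {fs. regular_seq A J fs}. enat (length fs))"

definition cohen_macaulay_quot :: "('v, 'k::field) mpoly ring \<Rightarrow> 'v set \<Rightarrow> ('v, 'k) mpoly set \<Rightarrow> bool" where
  "cohen_macaulay_quot R V I \<longleftrightarrow>
     depth (R Quot I) (genideal (R Quot I) ((\<lambda>v. I +>\<^bsub>R\<^esub> var v) ` V)) = krull_dim (R Quot I)"

end

(*
  Write n for the number of vertices, nu for the matching number and J for I(Delta)^[k].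
  A squarefree monomial x_S lies in I(Delta)^k iff S contains k pairwise disjoint facets.

  Upper bound: let P_0 < ... < P_d be a chain of primes above J and C the set of variables in
  P_0. The facets avoiding C contain no k disjoint ones, so nu <= (k - 1) + |C|. On the other
  hand d is at most the number of variables that are algebraically independent modulo P_0,
  because this number drops strictly along a strict inclusion of primes (incomparability for
  a simple extension C[t]); hence d <= n - |C| <= n - nu + k - 1.

  Lower bound: simplicial forests satisfy Koenig's theorem, so some vertex cover C has nu
  vertices. Dropping k - 1 of them leaves T such that every k disjoint facets meet T, i.e.
  J is contained in the prime (x_v | v in T); adjoining the other n - |T| = n - nu + k - 1
  variables one at a time gives a chain of primes of that length.
*)

theory Submission
  imports Defs "HOL-Computational_Algebra.Polynomial"
begin

section \<open>The polynomial ring\<close>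

abbreviation keys :: "('a \<Rightarrow>\<^sub>0 'b::zero) \<Rightarrow> 'a set" where
  "keys \<equiv> Poly_Mapping.keys"

abbreviation lookup :: "('a \<Rightarrow>\<^sub>0 'b::zero) \<Rightarrow> 'a \<Rightarrow> 'b" where
  "lookup \<equiv> Poly_Mapping.lookup"

abbreviation single :: "'a \<Rightarrow> 'b \<Rightarrow> 'a \<Rightarrow>\<^sub>0 'b::zero" where
  "single \<equiv> Poly_Mapping.single"

definition mvars :: "('v, 'k::zero) mpoly \<Rightarrow> 'v set" where
  "mvars p = (\<Union>m\<in>keys p. keys m)"

lemma keys_add_nat: "keys ((a::'v \<Rightarrow>\<^sub>0 nat) + b) = keys a \<union> keys b"
  by (auto simp: in_keys_iff lookup_add)

lemma mvars_subset_iff: "mvars p \<subseteq> V \<longleftrightarrow> (\<forall>m\<in>keys p. keys m \<subseteq> V)"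
  by (auto simp: mvars_def)

lemma mvars_0 [simp]: "mvars 0 = {}" and mvars_1 [simp]: "mvars 1 = {}"
  by (simp_all add: mvars_def)

lemma mvars_add: "mvars (p + q) \<subseteq> mvars p \<union> mvars q"
  unfolding mvars_def using keys_add[of p q] by blast

lemma mvars_uminus [simp]: "mvars (- p) = mvars p"
  by (simp add: mvars_def)

lemma mvars_diff: "mvars (p - q) \<subseteq> mvars p \<union> mvars q"
  unfolding mvars_def using keys_diff[of p q] by blast

lemma mvars_mult: "mvars (p * q) \<subseteq> mvars p \<union> mvars q"
proof
  fix v assume "v \<in> mvars (p * q)"
  then obtain m where "m \<in> keys (p * q)" "v \<in> keys m" by (auto simp: mvars_def)
  moreover obtain a b where "m = a + b" "a \<in> keys p" "b \<in> keys q"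
    using keys_mult[of p q] \<open>m \<in> keys (p * q)\<close> by blast
  ultimately show "v \<in> mvars p \<union> mvars q" by (auto simp: mvars_def keys_add_nat)
qed

lemma mvars_sum: "mvars (sum f I) \<subseteq> (\<Union>i\<in>I. mvars (f i))"
  by (induct I rule: infinite_finite_induct) (use mvars_add in fastforce)+

lemma mvars_prod: "mvars (prod f I) \<subseteq> (\<Union>i\<in>I. mvars (f i))"
  by (induct I rule: infinite_finite_induct) (use mvars_mult in fastforce)+

lemma mvars_single_subset: "mvars (single m c) \<subseteq> keys m"
  by (simp add: mvars_def)

lemma keys_var: "keys (var v :: ('v, 'k::field) mpoly) = {single v 1}"
  by (simp add: var_def)

lemma mvars_var [simp]: "mvars (var v :: ('v, 'k::field) mpoly) = {v}"
  by (simp add: mvars_def var_def)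

lemma mvars_xmon: "mvars (xmon S :: ('v, 'k::field) mpoly) \<subseteq> S"
  unfolding xmon_def using mvars_prod[of var S] by simp

lemma poly_ring_simps [simp]:
  "carrier (poly_ring V) = {p. mvars p \<subseteq> V}"
  "monoid.mult (poly_ring V) = (*)" "one (poly_ring V) = 1" "zero (poly_ring V) = 0"
  "add (poly_ring V) = (+)"
  by (simp_all add: poly_ring_def mvars_subset_iff)

lemma cring_poly_ring: "cring (poly_ring V :: ('v, 'k::field) mpoly ring)"
proof (rule cringI)
  show "abelian_group (poly_ring V :: ('v, 'k) mpoly ring)"
  proof (rule abelian_groupI)
    fix x assume "x \<in> carrier (poly_ring V :: ('v, 'k) mpoly ring)"
    then show "\<exists>y\<in>carrier (poly_ring V). y \<oplus>\<^bsub>poly_ring V\<^esub> x = \<zero>\<^bsub>poly_ring V\<^esub>"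
      by (intro bexI[of _ "- x"]) auto
  qed (use mvars_add in \<open>fastforce simp: add.assoc add.commute\<close>)+
  show "Group.comm_monoid (poly_ring V :: ('v, 'k) mpoly ring)"
    by (rule comm_monoidI) (use mvars_mult in \<open>fastforce simp: mult.assoc mult.commute\<close>)+
qed (simp add: distrib_right)

lemma ring_poly_ring: "ring (poly_ring V :: ('v, 'k::field) mpoly ring)"
  using cring_poly_ring cring.axioms(1) by blast

lemma a_inv_poly_ring [simp]:
  "mvars p \<subseteq> V \<Longrightarrow> a_inv (poly_ring V) p = - (p::('v, 'k::field) mpoly)"
  by (rule abelian_group.minus_equality[OF ring.is_abelian_group[OF ring_poly_ring]]) auto

definition sqfree_monomial :: "'v set \<Rightarrow> ('v \<Rightarrow>\<^sub>0 nat)" where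
  "sqfree_monomial S = (\<Sum>v\<in>S. single v 1)"

lemma lookup_sqfree_monomial:
  "finite S \<Longrightarrow> lookup (sqfree_monomial S) v = (if v \<in> S then 1 else 0)"
  by (simp add: sqfree_monomial_def lookup_sum lookup_single when_def)

lemma keys_sqfree_monomial [simp]: "finite S \<Longrightarrow> keys (sqfree_monomial S) = S"
  by (auto simp: in_keys_iff lookup_sqfree_monomial split: if_splits)

lemma xmon_eq_single: "finite S \<Longrightarrow> xmon S = single (sqfree_monomial S) (1::'k::field)"
  unfolding xmon_def var_def sqfree_monomial_def
  by (induct S rule: finite_induct) (auto simp: mult_single)

lemma keys_xmon: "finite S \<Longrightarrow> keys (xmon S :: ('v, 'k::field) mpoly) = {sqfree_monomial S}"
  by (simp add: xmon_eq_single)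

text \<open>The variable type carries no order. Listing the variables as \<open>us\<close> embeds the monomials
  additively into \<open>nat \<Rightarrow>\<^sub>0 nat\<close>, which is linearly ordered compatibly with addition, so that
  leading monomials multiply.\<close>

definition exponent_vector :: "'v list \<Rightarrow> ('v \<Rightarrow>\<^sub>0 nat) \<Rightarrow> (nat \<Rightarrow>\<^sub>0 nat)" where
  "exponent_vector us m = (\<Sum>i<length us. single i (lookup m (us ! i)))"

lemma lookup_exponent_vector:
  "lookup (exponent_vector us m) i = (if i < length us then lookup m (us ! i) else 0)"
  by (simp add: exponent_vector_def lookup_sum lookup_single when_def)

lemma exponent_vector_add:
  "exponent_vector us (a + b) = exponent_vector us a + exponent_vector us b"
  by (simp add: exponent_vector_def lookup_add single_add sum.distrib)

lemma exponent_vector_inj: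
  assumes "keys a \<subseteq> set us" "keys b \<subseteq> set us" "exponent_vector us a = exponent_vector us b"
  shows "a = b"
proof (rule poly_mapping_eqI)
  fix v
  show "lookup a v = lookup b v"
  proof (cases "v \<in> set us")
    case True
    then obtain i where i: "i < length us" "us ! i = v" by (auto simp: in_set_conv_nth)
    have "lookup (exponent_vector us a) i = lookup (exponent_vector us b) i" using assms(3) by simp
    then show ?thesis using i by (simp add: lookup_exponent_vector)
  next
    case False
    then have "v \<notin> keys a" "v \<notin> keys b" using assms by auto
    then show ?thesis by (simp add: in_keys_iff)
  qed
qed

lemma obtain_leading_monomial:
  fixes p :: "('v, 'k::zero) mpoly"
  assumes "p \<noteq> 0" "mvars p \<subseteq> set us"
  obtains a0 where "a0 \<in> keys p"
    "\<And>a. a \<in> keys p \<Longrightarrow> a \<noteq> a0 \<Longrightarrow> exponent_vector us a < exponent_vector us a0"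
proof -
  have "finite (exponent_vector us ` keys p)" "exponent_vector us ` keys p \<noteq> {}"
    using assms(1) by simp_all
  from Max_in[OF this] obtain a0 where a0: "a0 \<in> keys p"
    "exponent_vector us a0 = Max (exponent_vector us ` keys p)" by auto
  show thesis
  proof (rule that[OF a0(1)])
    fix a assume "a \<in> keys p" "a \<noteq> a0"
    moreover have "exponent_vector us a \<le> exponent_vector us a0" using a0 \<open>a \<in> keys p\<close> by simp
    ultimately show "exponent_vector us a < exponent_vector us a0"
      using exponent_vector_inj[of a us a0] a0(1) assms(2) by (force simp: mvars_def)
  qed
qed

lemma lookup_mult_leading:
  fixes p q :: "('v, 'k::comm_ring) mpoly"
  assumes a0: "\<And>a. a \<in> keys p \<Longrightarrow> a \<noteq> a0 \<Longrightarrow> exponent_vector us a < exponent_vector us a0"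
    and b0: "\<And>b. b \<in> keys q \<Longrightarrow> b \<noteq> b0 \<Longrightarrow> exponent_vector us b < exponent_vector us b0"
  shows "lookup (p * q) (a0 + b0) = lookup p a0 * lookup q b0"
proof -
  define p' where "p' = p - single a0 (lookup p a0)"
  define q' where "q' = q - single b0 (lookup q b0)"
  have kp': "keys p' \<subseteq> keys p - {a0}" and kq': "keys q' \<subseteq> keys q - {b0}"
    by (auto simp: p'_def q'_def in_keys_iff lookup_minus lookup_single when_def split: if_splits)
  have not_key: "a0 + b0 \<notin> keys (f * g)"
    if "\<And>a b. a \<in> keys f \<Longrightarrow> b \<in> keys g \<Longrightarrow> exponent_vector us a + exponent_vector us b
          < exponent_vector us a0 + exponent_vector us b0" for f g :: "('v, 'k) mpoly"
    using keys_mult[of f g] that by (force simp flip: exponent_vector_add)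
  have "a0 + b0 \<notin> keys (single a0 (lookup p a0) * q')"
    by (rule not_key) (use kq' b0 in \<open>auto split: if_splits\<close>)
  moreover have "a0 + b0 \<notin> keys (p' * q)"
  proof (rule not_key)
    fix a b assume "a \<in> keys p'" "b \<in> keys q"
    then have "exponent_vector us a < exponent_vector us a0"
      "exponent_vector us b \<le> exponent_vector us b0" using kp' a0 b0 by (auto intro: less_imp_le)
    then show "exponent_vector us a + exponent_vector us b
        < exponent_vector us a0 + exponent_vector us b0"
      by (rule add_less_le_mono)
  qed
  moreover have "p * q = single a0 (lookup p a0) * single b0 (lookup q b0)
      + single a0 (lookup p a0) * q' + p' * q"
    by (simp add: p'_def q'_def algebra_simps)
  ultimately show ?thesis by (simp add: lookup_add mult_single in_keys_iff)
qed

lemma mpoly_mult_neq_0: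
  fixes p q :: "('v, 'k::idom) mpoly"
  assumes "p \<noteq> 0" "q \<noteq> 0"
  shows "p * q \<noteq> 0"
proof -
  obtain us where us: "set us = mvars p \<union> mvars q"
    using finite_list[of "mvars p \<union> mvars q"] by (auto simp: mvars_def)
  obtain a0 where a0: "a0 \<in> keys p"
    "\<And>a. a \<in> keys p \<Longrightarrow> a \<noteq> a0 \<Longrightarrow> exponent_vector us a < exponent_vector us a0"
    using obtain_leading_monomial[OF assms(1)] us by blast
  obtain b0 where b0: "b0 \<in> keys q"
    "\<And>b. b \<in> keys q \<Longrightarrow> b \<noteq> b0 \<Longrightarrow> exponent_vector us b < exponent_vector us b0"
    using obtain_leading_monomial[OF assms(2)] us by blast
  have "lookup (p * q) (a0 + b0) = lookup p a0 * lookup q b0"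
    by (rule lookup_mult_leading) (use a0 b0 in auto)
  then show ?thesis using a0(1) b0(1) by (auto simp: in_keys_iff)
qed

lemma ideal_poly_ringI:
  fixes I :: "('v, 'k::field) mpoly set"
  assumes "\<And>p. p \<in> I \<Longrightarrow> mvars p \<subseteq> V" "0 \<in> I"
    and "\<And>a b. a \<in> I \<Longrightarrow> b \<in> I \<Longrightarrow> a + b \<in> I"
    and "\<And>a. a \<in> I \<Longrightarrow> - a \<in> I"
    and "\<And>a x. a \<in> I \<Longrightarrow> mvars x \<subseteq> V \<Longrightarrow> x * a \<in> I"
  shows "ideal I (poly_ring V)"
proof (rule idealI[OF ring_poly_ring])
  show "subgroup I (add_monoid (poly_ring V))"
  proof (rule subgroup.intro)
    fix x assume "x \<in> I"
    have "inv\<^bsub>add_monoid (poly_ring V)\<^esub> x = a_inv (poly_ring V) x" by (simp add: a_inv_def)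
    then show "inv\<^bsub>add_monoid (poly_ring V)\<^esub> x \<in> I" using assms \<open>x \<in> I\<close> by simp
  qed (use assms in auto)
qed (use assms in \<open>auto simp: mult.commute\<close>)

definition monomial_ideal :: "'v set \<Rightarrow> (('v \<Rightarrow>\<^sub>0 nat) \<Rightarrow> bool) \<Rightarrow> ('v, 'k::field) mpoly set" where
  "monomial_ideal V D = {p. mvars p \<subseteq> V \<and> (\<forall>m\<in>keys p. D m)}"

lemma monomial_ideal_add:
  "p \<in> monomial_ideal V D \<Longrightarrow> q \<in> monomial_ideal V D \<Longrightarrow> p + q \<in> monomial_ideal V D"
  unfolding monomial_ideal_def using keys_add[of p q] mvars_add[of p q] by auto

lemma monomial_ideal_mult:
  assumes "\<And>m n. D1 m \<Longrightarrow> D2 n \<Longrightarrow> D (m + n)"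
    and "p \<in> monomial_ideal V D1" "q \<in> monomial_ideal V D2"
  shows "p * q \<in> monomial_ideal V D"
proof -
  have "D m" if "m \<in> keys (p * q)" for m
  proof -
    obtain u w where "m = u + w" "u \<in> keys p" "w \<in> keys q"
      using keys_mult[of p q] \<open>m \<in> keys (p * q)\<close> by blast
    then show "D m" using assms by (auto simp: monomial_ideal_def)
  qed
  then show ?thesis using assms(2,3) mvars_mult[of p q] by (auto simp: monomial_ideal_def)
qed

lemma monomial_ideal_ideal:
  assumes "\<And>m n. D m \<Longrightarrow> D (m + n)"
  shows "ideal (monomial_ideal V D :: ('v, 'k::field) mpoly set) (poly_ring V)"
proof (rule ideal_poly_ringI)
  fix a x :: "('v, 'k) mpoly" assume "a \<in> monomial_ideal V D" "mvars x \<subseteq> V"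
  moreover have "x \<in> monomial_ideal V (\<lambda>_. True)" using \<open>mvars x \<subseteq> V\<close>
    by (simp add: monomial_ideal_def)
  ultimately show "x * a \<in> monomial_ideal V D"
    using monomial_ideal_mult[of "\<lambda>_. True" D D] assms by (metis add.commute)
next
  show "a + b \<in> monomial_ideal V D" if "a \<in> monomial_ideal V D" "b \<in> monomial_ideal V D"
    for a b :: "('v, 'k) mpoly"
    using that by (rule monomial_ideal_add)
qed (auto simp: monomial_ideal_def)

definition var_ideal :: "'v set \<Rightarrow> 'v set \<Rightarrow> ('v, 'k::field) mpoly set" where
  "var_ideal V T = monomial_ideal V (\<lambda>m. keys m \<inter> T \<noteq> {})"

lemma var_ideal_ideal: "ideal (var_ideal V T :: ('v, 'k::field) mpoly set) (poly_ring V)"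
  unfolding var_ideal_def by (rule monomial_ideal_ideal) (auto simp: keys_add_nat)

lemma var_ideal_mono: "T \<subseteq> T' \<Longrightarrow> (var_ideal V T :: ('v, 'k::field) mpoly set) \<subseteq> var_ideal V T'"
  by (fastforce simp: var_ideal_def monomial_ideal_def)

lemma var_in_var_ideal_iff:
  "w \<in> V \<Longrightarrow> (var w :: ('v, 'k::field) mpoly) \<in> var_ideal V T \<longleftrightarrow> w \<in> T"
  by (auto simp: var_ideal_def monomial_ideal_def keys_var)

lemma xmon_in_var_ideal:
  assumes "finite S" "S \<subseteq> V" "S \<inter> T \<noteq> {}"
  shows "(xmon S :: ('v, 'k::field) mpoly) \<in> var_ideal V T"
  using assms mvars_xmon[of S] by (auto simp: var_ideal_def monomial_ideal_def keys_xmon)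

text \<open>\<open>avoiding_part T\<close> is the substitution \<open>x\<^sub>v := 0\<close> for \<open>v \<in> T\<close>.\<close>

definition avoiding_part :: "'v set \<Rightarrow> ('v, 'k::field) mpoly \<Rightarrow> ('v, 'k) mpoly" where
  "avoiding_part T p = Abs_poly_mapping (\<lambda>m. if keys m \<inter> T = {} then lookup p m else 0)"

lemma lookup_avoiding_part:
  "lookup (avoiding_part T p) m = (if keys m \<inter> T = {} then lookup p m else 0)"
proof -
  have "finite {m. (if keys m \<inter> T = {} then lookup p m else 0) \<noteq> 0}"
    by (rule finite_subset[of _ "keys p"]) (auto simp: in_keys_iff)
  then show ?thesis by (simp add: avoiding_part_def)
qed

lemma keys_avoiding_part: "keys (avoiding_part T p) = {m \<in> keys p. keys m \<inter> T = {}}"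
  by (simp add: set_eq_iff in_keys_iff[of _ "avoiding_part T p"] in_keys_iff[of _ p]
      lookup_avoiding_part)

lemma avoiding_part_eq_self: "(\<And>m. m \<in> keys p \<Longrightarrow> keys m \<inter> T = {}) \<Longrightarrow> avoiding_part T p = p"
  by (rule poly_mapping_eqI) (auto simp: lookup_avoiding_part in_keys_iff)

lemma avoiding_part_eq_0: "(\<And>m. m \<in> keys p \<Longrightarrow> keys m \<inter> T \<noteq> {}) \<Longrightarrow> avoiding_part T p = 0"
  by (rule poly_mapping_eqI) (auto simp: lookup_avoiding_part in_keys_iff)

lemma avoiding_part_add: "avoiding_part T (p + q) = avoiding_part T p + avoiding_part T q"
  by (rule poly_mapping_eqI) (simp add: lookup_avoiding_part lookup_add)

lemma keys_mult_meets:
  fixes p q :: "('v, 'k::field) mpoly"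
  assumes "\<And>m. m \<in> keys p \<Longrightarrow> keys m \<inter> T \<noteq> {}" "m \<in> keys (p * q)"
  shows "keys m \<inter> T \<noteq> {}"
proof -
  obtain u w where "m = u + w" "u \<in> keys p" "w \<in> keys q" using keys_mult[of p q] assms(2) by blast
  then show ?thesis using assms(1)[of u] by (auto simp: keys_add_nat)
qed

lemma avoiding_part_mult:
  fixes p q :: "('v, 'k::field) mpoly"
  shows "avoiding_part T (p * q) = avoiding_part T p * avoiding_part T q"
proof -
  let ?p0 = "avoiding_part T p" and ?q0 = "avoiding_part T q"
  have meets: "keys m \<inter> T \<noteq> {}" if "m \<in> keys (f - avoiding_part T f)" for m f
    using that by (auto simp: in_keys_iff lookup_avoiding_part lookup_minus split: if_splits)
  have "avoiding_part T ((f - avoiding_part T f) * g) = 0" for f g :: "('v, 'k) mpoly"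
    by (rule avoiding_part_eq_0) (rule keys_mult_meets[OF meets])
  then have "avoiding_part T ((p - ?p0) * q + (q - ?q0) * ?p0) = 0"
    by (simp add: avoiding_part_add)
  moreover have "avoiding_part T (?p0 * ?q0) = ?p0 * ?q0"
  proof (rule avoiding_part_eq_self)
    fix m assume "m \<in> keys (?p0 * ?q0)"
    then obtain u w where "m = u + w" "u \<in> keys ?p0" "w \<in> keys ?q0" using keys_mult by blast
    then show "keys m \<inter> T = {}" by (auto simp: keys_avoiding_part keys_add_nat)
  qed
  moreover have "p * q = ?p0 * ?q0 + ((p - ?p0) * q + (q - ?q0) * ?p0)"
    by (simp add: algebra_simps)
  ultimately show ?thesis by (metis avoiding_part_add add.right_neutral)
qed

lemma var_ideal_iff: "p \<in> var_ideal V T \<longleftrightarrow> mvars p \<subseteq> V \<and> avoiding_part T p = 0"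
  by (simp add: var_ideal_def monomial_ideal_def flip: keys_eq_empty add: keys_avoiding_part) blast

lemma var_ideal_prime:
  assumes "T \<subseteq> V"
  shows "primeideal (var_ideal V T :: ('v, 'k::field) mpoly set) (poly_ring V)"
proof (rule primeidealI[OF var_ideal_ideal cring_poly_ring])
  have "avoiding_part T (1::('v, 'k) mpoly) = 1" by (rule avoiding_part_eq_self) simp
  then have "(1::('v, 'k) mpoly) \<notin> var_ideal V T" by (simp add: var_ideal_iff)
  then show "carrier (poly_ring V) \<noteq> (var_ideal V T :: ('v, 'k) mpoly set)"
    by (metis CollectI empty_subsetI mvars_1 poly_ring_simps(1))
  fix a b :: "('v, 'k) mpoly"
  assume "a \<in> carrier (poly_ring V)" "b \<in> carrier (poly_ring V)"
    and "a \<otimes>\<^bsub>poly_ring V\<^esub> b \<in> var_ideal V T"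
  then show "a \<in> var_ideal V T \<or> b \<in> var_ideal V T"
    using mpoly_mult_neq_0 by (auto simp: var_ideal_iff avoiding_part_mult)
qed

lemma primeideal_xmon_imp_var:
  fixes P :: "('v, 'k::field) mpoly set"
  assumes P: "primeideal P (poly_ring V)" and S: "finite S" "S \<subseteq> V" and x: "xmon S \<in> P"
  shows "\<exists>v\<in>S. (var v :: ('v, 'k) mpoly) \<in> P"
  using S x
proof (induction S rule: finite_induct)
  case empty
  then show ?case
    using primeideal.I_notcarr[OF P] ideal.one_imp_carrier[OF primeideal.axioms(1)[OF P]]
    by (simp add: xmon_def)
next
  case (insert a S)
  have "mvars (xmon S :: ('v, 'k) mpoly) \<subseteq> V"
    using mvars_xmon[of S] insert.prems by blast
  with insert have "(var a :: ('v, 'k) mpoly) \<in> P \<or> xmon S \<in> P"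
    using primeideal.I_prime[OF P, of "var a" "xmon S"] by (simp add: xmon_def)
  then show ?case using insert by auto
qed

section \<open>Chains of prime ideals in a quotient ring\<close>

definition prime_chain :: "('a, 'b) ring_scheme \<Rightarrow> (nat \<Rightarrow> 'a set) \<Rightarrow> nat \<Rightarrow> bool" where
  "prime_chain R P n \<longleftrightarrow> (\<forall>i\<le>n. primeideal (P i) R) \<and> (\<forall>i<n. P i \<subset> P (Suc i))"

lemma krull_dim_prime_chain: "krull_dim A = (SUP n\<in>{n. \<exists>P. prime_chain A P n}. enat n)"
  by (simp add: krull_dim_def prime_chain_def)

lemma prime_chain_mono:
  assumes "prime_chain R P n" "i \<le> j" "j \<le> n"
  shows "P i \<subseteq> P j"
proof -
  have "P i \<subseteq> P (i + d)" if "i + d \<le> n" for d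
    using that
  proof (induction d)
    case (Suc d)
    then have "P (i + d) \<subset> P (Suc (i + d))" using assms(1) by (simp add: prime_chain_def)
    then show ?case using Suc by simp
  qed simp
  then show ?thesis using assms(2,3) by (metis le_add_diff_inverse)
qed

context cring
begin

lemma primeideal_Union_Quot:
  assumes J: "ideal J R" and Q: "primeideal Q (R Quot J)"
  shows "primeideal (\<Union>Q) R" "J \<subseteq> \<Union>Q"
proof -
  interpret J: ideal J R by fact
  have Qc: "Q \<subseteq> carrier (R Quot J)" using Q
    by (simp add: primeideal_def ideal_def additive_subgroup.a_subset)
  have "\<Union>Q = {r \<in> carrier R. J +> r \<in> Q}"
    using canonical_proj_vimage_mem_iff[OF J Qc] canonical_proj_vimage_in_carrier[OF J Qc] by blast
  then show "primeideal (\<Union>Q) R"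
    using ring_hom_ring.primeideal_vimage[OF J.rcos_ring_hom_ring is_cring Q] by simp
  have "J \<in> Q"
    using additive_subgroup.zero_closed[OF ideal.axioms(1)[OF primeideal.axioms(1)[OF Q]]]
    by (simp add: FactRing_def)
  then show "J \<subseteq> \<Union>Q" by blast
qed

lemma primeideal_image_Quot:
  assumes J: "ideal J R" and P: "primeideal P R" and JP: "J \<subseteq> P"
  shows "primeideal ((+>) J ` P) (R Quot J)"
proof -
  interpret J: ideal J R by fact
  interpret P: primeideal P R by fact
  have hom: "(+>) J \<in> ring_hom R (R Quot J)" by (rule J.rcos_ring_hom)
  have Ic: "(+>) J ` P \<subseteq> carrier (R Quot J)"
    using P.a_subset unfolding FactRing_def A_RCOSETS_def' by auto
  have "\<Union>((+>) J ` P) = P" using iffD1[OF ideal_incl_iff[OF J P.is_ideal] JP] by (rule sym)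
  then have mem: "a \<in> P \<longleftrightarrow> J +> a \<in> (+>) J ` P" if "a \<in> carrier R" for a
    using canonical_proj_vimage_mem_iff[OF J Ic that] by simp
  have rep: "\<exists>a\<in>carrier R. x = J +> a" if "x \<in> carrier (R Quot J)" for x
    using that unfolding FactRing_def A_RCOSETS_def' by auto
  show ?thesis
  proof (rule primeidealI)
    show "ideal ((+>) J ` P) (R Quot J)" using ring_ideal_imp_quot_ideal[OF J P.is_ideal] .
    show "cring (R Quot J)" using J.quotient_is_cring[OF is_cring] .
    have "\<one> \<notin> P" using P.I_notcarr P.one_imp_carrier by blast
    then have "J +> \<one> \<notin> (+>) J ` P" using mem[OF one_closed] by simp
    then show "carrier (R Quot J) \<noteq> (+>) J ` P"
      using ring_hom_closed[OF hom one_closed] by metis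
  next
    fix x y assume x: "x \<in> carrier (R Quot J)" and y: "y \<in> carrier (R Quot J)"
      and xy: "x \<otimes>\<^bsub>R Quot J\<^esub> y \<in> (+>) J ` P"
    obtain a b where ab: "a \<in> carrier R" "b \<in> carrier R" "x = J +> a" "y = J +> b"
      using rep[OF x] rep[OF y] by auto
    then have "a \<otimes> b \<in> P" using mem[of "a \<otimes> b"] xy ring_hom_mult[OF hom ab(1,2)] by simp
    then have "a \<in> P \<or> b \<in> P" using P.I_prime ab(1,2) by simp
    then show "x \<in> (+>) J ` P \<or> y \<in> (+>) J ` P" using ab(3,4) by (metis imageI)
  qed
qed

lemma image_Union_Quot:
  assumes J: "ideal J R" and Q: "ideal Q (R Quot J)"
  shows "(+>) J ` (\<Union>Q) = Q"
proof -
  have Qc: "Q \<subseteq> carrier (R Quot J)" using Q by (simp add: ideal_def additive_subgroup.a_subset)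
  have "x \<in> (+>) J ` (\<Union>Q)" if "x \<in> Q" for x
  proof -
    obtain a where "a \<in> carrier R" "x = J +> a"
      using Qc \<open>x \<in> Q\<close> unfolding FactRing_def A_RCOSETS_def' by auto
    then show ?thesis using canonical_proj_vimage_mem_iff[OF J Qc] \<open>x \<in> Q\<close> by blast
  qed
  then show ?thesis
    using canonical_proj_vimage_mem_iff[OF J Qc] canonical_proj_vimage_in_carrier[OF J Qc] by blast
qed

lemma prime_chain_Union_Quot:
  assumes J: "ideal J R" and Q: "prime_chain (R Quot J) Q n"
  shows "prime_chain R (\<lambda>i. \<Union>(Q i)) n" "J \<subseteq> \<Union>(Q 0)"
proof -
  have prime: "primeideal (Q i) (R Quot J)" if "i \<le> n" for i
    using Q that by (simp add: prime_chain_def)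
  have "\<Union>(Q i) \<subset> \<Union>(Q (Suc i))" if "i < n" for i
  proof -
    have "Q i \<subset> Q (Suc i)" using Q that by (simp add: prime_chain_def)
    moreover have "Q i = (+>) J ` \<Union>(Q i)" "Q (Suc i) = (+>) J ` \<Union>(Q (Suc i))"
      using image_Union_Quot[OF J] prime that primeideal.axioms(1) by (metis Suc_leI less_imp_le)+
    ultimately show ?thesis by auto
  qed
  then show "prime_chain R (\<lambda>i. \<Union>(Q i)) n"
    using primeideal_Union_Quot(1)[OF J prime] by (simp add: prime_chain_def)
  show "J \<subseteq> \<Union>(Q 0)" using primeideal_Union_Quot(2)[OF J prime] by simp
qed

lemma prime_chain_image_Quot:
  assumes J: "ideal J R" and P: "prime_chain R P n" and JP: "J \<subseteq> P 0"
  shows "prime_chain (R Quot J) (\<lambda>i. (+>) J ` P i) n"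
proof -
  have prime: "primeideal (P i) R" and JPi: "J \<subseteq> P i" if "i \<le> n" for i
    using P prime_chain_mono[OF P, of 0 i] JP that by (auto simp: prime_chain_def)
  have "(+>) J ` P i \<subset> (+>) J ` P (Suc i)" if "i < n" for i
  proof -
    have "P i \<subset> P (Suc i)" using P that by (simp add: prime_chain_def)
    moreover have "P i = \<Union>((+>) J ` P i)" "P (Suc i) = \<Union>((+>) J ` P (Suc i))"
      using iffD1[OF ideal_incl_iff[OF J primeideal.axioms(1)[OF prime]] JPi] that by simp_all
    ultimately show ?thesis by (metis image_mono psubset_eq)
  qed
  then show ?thesis
    using primeideal_image_Quot[OF J prime JPi] by (simp add: prime_chain_def)
qed

lemma krull_dim_Quot_eqI:
  assumes J: "ideal J R"
    and upper: "\<And>P n. prime_chain R P n \<Longrightarrow> J \<subseteq> P 0 \<Longrightarrow> n \<le> d"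
    and lower: "\<exists>P. prime_chain R P d \<and> J \<subseteq> P 0"
  shows "krull_dim (R Quot J) = enat d"
proof -
  have "n \<le> d" if "prime_chain (R Quot J) Q n" for Q n
    using upper prime_chain_Union_Quot[OF J that] by blast
  moreover have "\<exists>Q. prime_chain (R Quot J) Q d"
    using lower prime_chain_image_Quot[OF J] by blast
  ultimately show ?thesis
    unfolding krull_dim_prime_chain by (intro antisym SUP_least) (auto intro: SUP_upper)
qed

end

section \<open>Chains of primes and algebraically independent variables\<close>

lemma degree_minus_lead_monom_less:
  assumes "0 < degree g"
  shows "degree (g - monom (lead_coeff g) (degree g)) < degree g"
proof -
  have "degree (g - monom (lead_coeff g) (degree g)) \<le> degree g - 1"
    by (rule degree_le) (auto simp: coeff_monom coeff_eq_0 less_diff_conv)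
  then show ?thesis using assms by simp
qed

lemma degree_cancel_lead_less:
  fixes f g :: "'a::comm_ring_1 poly"
  assumes "degree g \<le> degree f" "0 < degree f"
  shows "degree (smult (lead_coeff g) f - monom (lead_coeff f) (degree f - degree g) * g)
    < degree f"
proof -
  have "degree (smult (lead_coeff g) f - monom (lead_coeff f) (degree f - degree g) * g)
      \<le> degree f - 1"
  proof (rule degree_le, intro allI impI)
    fix i assume "degree f - 1 < i"
    then consider "i = degree f" | "degree f < i" using assms(2) by linarith
    then show
      "coeff (smult (lead_coeff g) f - monom (lead_coeff f) (degree f - degree g) * g) i = 0"
    proof cases
      case 1
      then show ?thesis using assms(1)
        by (simp add: coeff_monom_mult mult.commute[of _ "lead_coeff f"])
    next
      case 2
      then show ?thesis using assms(1) by (simp add: coeff_monom_mult coeff_eq_0)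
    qed
  qed
  then show ?thesis using assms by simp
qed

text \<open>If \<open>t\<close> is algebraic over \<open>C\<close> modulo the prime \<open>P\<close>, then \<open>P \<subseteq> Q\<close> can only be separated
  on \<open>C[t]\<close> if they are already separated on \<open>C\<close>.\<close>

locale incomparability =
  fixes B C P Q :: "'a::comm_ring_1 set" and t :: 'a
  assumes B_one: "1 \<in> B" and B_diff: "\<And>a b. a \<in> B \<Longrightarrow> b \<in> B \<Longrightarrow> a - b \<in> B"
    and B_mult: "\<And>a b. a \<in> B \<Longrightarrow> b \<in> B \<Longrightarrow> a * b \<in> B"
    and no_zero_divisors: "\<And>a b. a \<in> B \<Longrightarrow> b \<in> B \<Longrightarrow> a \<noteq> 0 \<Longrightarrow> b \<noteq> 0 \<Longrightarrow> a * b \<noteq> 0"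
    and C_subset: "C \<subseteq> B" and C_one: "1 \<in> C"
    and C_diff: "\<And>a b. a \<in> C \<Longrightarrow> b \<in> C \<Longrightarrow> a - b \<in> C"
    and C_mult: "\<And>a b. a \<in> C \<Longrightarrow> b \<in> C \<Longrightarrow> a * b \<in> C"
    and t_in: "t \<in> B"
    and P_subset: "P \<subseteq> Q" and Q_subset: "Q \<subseteq> B" and P_zero: "0 \<in> P"
    and P_diff: "\<And>a b. a \<in> P \<Longrightarrow> b \<in> P \<Longrightarrow> a - b \<in> P"
    and P_mult: "\<And>a x. a \<in> P \<Longrightarrow> x \<in> B \<Longrightarrow> x * a \<in> P"
    and P_prime: "\<And>a b. a \<in> B \<Longrightarrow> b \<in> B \<Longrightarrow> a * b \<in> P \<Longrightarrow> a \<in> P \<or> b \<in> P"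
    and Q_diff: "\<And>a b. a \<in> Q \<Longrightarrow> b \<in> Q \<Longrightarrow> a - b \<in> Q"
    and Q_mult: "\<And>a x. a \<in> Q \<Longrightarrow> x \<in> B \<Longrightarrow> x * a \<in> Q"
begin

lemma B_zero: "0 \<in> B" and C_zero: "0 \<in> C"
  using B_diff[OF B_one B_one] C_diff[OF C_one C_one] by simp_all

lemma B_add: "a \<in> B \<Longrightarrow> b \<in> B \<Longrightarrow> a + b \<in> B"
  using B_diff[of a "0 - b"] B_diff[OF B_zero, of b] by simp

lemma C_add: "a \<in> C \<Longrightarrow> b \<in> C \<Longrightarrow> a + b \<in> C"
  using C_diff[of a "0 - b"] C_diff[OF C_zero, of b] by simp

lemma P_add: "a \<in> P \<Longrightarrow> b \<in> P \<Longrightarrow> a + b \<in> P"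
  using P_diff[of a "0 - b"] P_diff[OF P_zero, of b] by simp

lemma B_sum: "(\<And>i. i \<in> I \<Longrightarrow> f i \<in> B) \<Longrightarrow> sum f I \<in> B"
  and C_sum: "(\<And>i. i \<in> I \<Longrightarrow> f i \<in> C) \<Longrightarrow> sum f I \<in> C"
  and P_sum: "(\<And>i. i \<in> I \<Longrightarrow> f i \<in> P) \<Longrightarrow> sum f I \<in> P"
  by (induct I rule: infinite_finite_induct) (auto intro: B_zero B_add C_zero C_add P_zero P_add)

lemma B_power: "a \<in> B \<Longrightarrow> a ^ n \<in> B" and C_power: "a \<in> C \<Longrightarrow> a ^ n \<in> C"
  by (induct n) (auto intro: B_one B_mult C_one C_mult)

lemma P_mult_right: "a \<in> P \<Longrightarrow> x \<in> B \<Longrightarrow> a * x \<in> P"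
  using P_mult by (metis mult.commute)

lemma one_notin_P: "1 \<notin> P" if "a \<in> B" "a \<notin> P"
  using P_mult[of 1 a] that by auto

lemma power_notin_P: "a \<in> B \<Longrightarrow> a \<notin> P \<Longrightarrow> a ^ n \<notin> P"
proof (induct n)
  case (Suc n)
  then show ?case using P_prime[of a "a ^ n"] B_power[of a n] by auto
qed (use one_notin_P in auto)

definition C_polys :: "'a poly set" where
  "C_polys = {f. \<forall>i. coeff f i \<in> C}"

lemma C_polysD: "f \<in> C_polys \<Longrightarrow> coeff f i \<in> C"
  by (simp add: C_polys_def)

lemma C_polys_diff: "f \<in> C_polys \<Longrightarrow> g \<in> C_polys \<Longrightarrow> f - g \<in> C_polys"
  and C_polys_add: "f \<in> C_polys \<Longrightarrow> g \<in> C_polys \<Longrightarrow> f + g \<in> C_polys"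
  and C_polys_smult: "c \<in> C \<Longrightarrow> f \<in> C_polys \<Longrightarrow> smult c f \<in> C_polys"
  and C_polys_monom: "c \<in> C \<Longrightarrow> monom c k \<in> C_polys"
  and C_polys_mult: "f \<in> C_polys \<Longrightarrow> g \<in> C_polys \<Longrightarrow> f * g \<in> C_polys"
  by (auto simp: C_polys_def coeff_monom coeff_mult intro: C_diff C_add C_mult C_zero C_sum)

lemma poly_in_B: "f \<in> C_polys \<Longrightarrow> poly f t \<in> B"
  unfolding poly_altdef using C_subset t_in
  by (auto intro!: B_sum B_mult B_power simp: C_polys_def)

lemma lead_coeff_in_B: "f \<in> C_polys \<Longrightarrow> lead_coeff f \<in> B"
  using C_subset by (auto simp: C_polys_def)

definition separating :: "'a poly set" where
  "separating = {f \<in> C_polys. poly f t \<in> Q \<and> poly f t \<notin> P}"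

definition relations :: "'a poly set" where
  "relations = {g \<in> C_polys. poly g t \<in> P \<and> lead_coeff g \<notin> P}"

lemma relation_of_nonzero:
  assumes "g \<in> C_polys" "poly g t \<in> P" "\<exists>i. coeff g i \<notin> P"
  shows "\<exists>g'\<in>relations. degree g' \<le> degree g"
  using assms
proof (induction "degree g" arbitrary: g rule: less_induct)
  case less
  show ?case
  proof (cases "lead_coeff g \<in> P")
    case False
    then show ?thesis using less.prems by (auto simp: relations_def)
  next
    case True
    have "0 < degree g"
      using True less.prems(3) P_zero by (metis coeff_eq_0 gr0I le_degree le_zero_eq)
    define g1 where "g1 = g - monom (lead_coeff g) (degree g)"
    have deg: "degree g1 < degree g"
      unfolding g1_def by (rule degree_minus_lead_monom_less) fact
    have "g1 \<in> C_polys"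
      unfolding g1_def using less.prems(1) by (intro C_polys_diff C_polys_monom C_polysD)
    moreover have "poly g1 t \<in> P"
      unfolding g1_def using less.prems(2) True t_in
      by (auto simp: poly_monom intro!: P_diff P_mult_right B_power)
    moreover have "\<exists>i. coeff g1 i \<notin> P"
      using less.prems(3) True by (metis coeff_diff coeff_monom diff_zero g1_def)
    ultimately obtain g' where "g' \<in> relations" "degree g' \<le> degree g1"
      using less.hyps[OF deg] by blast
    then show ?thesis using deg by (intro bexI) auto
  qed
qed

lemma separating_normalize:
  assumes "f \<in> separating"
  shows "\<exists>f'\<in>separating. degree f' \<le> degree f \<and> (degree f' = 0 \<or> lead_coeff f' \<notin> P)"
  using assms
proof (induction "degree f" arbitrary: f rule: less_induct)
  case less
  show ?case
  proof (cases "degree f = 0 \<or> lead_coeff f \<notin> P")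
    case True
    then show ?thesis using less.prems by blast
  next
    case False
    define f1 where "f1 = f - monom (lead_coeff f) (degree f)"
    have deg: "degree f1 < degree f"
      unfolding f1_def using False by (intro degree_minus_lead_monom_less) simp
    have lead: "lead_coeff f * t ^ degree f \<in> P"
      using False t_in by (auto intro: P_mult_right B_power)
    have "poly f1 t = poly f t - lead_coeff f * t ^ degree f"
      unfolding f1_def by (simp add: poly_monom)
    then have "f1 \<in> separating"
      using less.prems lead P_subset P_add[OF _ lead, of "poly f1 t"]
      unfolding f1_def separating_def
      by (auto intro!: Q_diff C_polys_diff C_polys_monom C_polysD)
    then obtain f' where "f' \<in> separating" "degree f' \<le> degree f1"
      "degree f' = 0 \<or> lead_coeff f' \<notin> P"
      using less.hyps[OF deg] by blast
    then show ?thesis using deg by (intro bexI) auto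
  qed
qed

lemma pseudo_division:
  assumes f: "f \<in> C_polys" "0 < degree f"
  shows "g \<in> C_polys \<Longrightarrow>
    \<exists>e a r. a \<in> C_polys \<and> r \<in> C_polys \<and> smult (lead_coeff f ^ e) g = a * f + r
      \<and> degree r < degree f"
proof (induction "degree g" arbitrary: g rule: less_induct)
  case less
  show ?case
  proof (cases "degree g < degree f")
    case True
    then show ?thesis using less.prems C_polys_monom[OF C_zero, of 0]
      by (intro exI[of _ 0] exI[of _ 0] exI[of _ g]) auto
  next
    case False
    define k where "k = degree g - degree f"
    define g1 where "g1 = smult (lead_coeff f) g - monom (lead_coeff g) k * f"
    have "degree g1 < degree g"
      unfolding g1_def k_def using False f by (intro degree_cancel_lead_less) auto
    moreover have "g1 \<in> C_polys"
      unfolding g1_def using less.prems f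
      by (intro C_polys_diff C_polys_smult C_polys_mult C_polys_monom C_polysD)
    ultimately obtain e a r where ear: "a \<in> C_polys" "r \<in> C_polys"
      "smult (lead_coeff f ^ e) g1 = a * f + r" "degree r < degree f"
      using less.hyps by meson
    define a' where "a' = a + monom (lead_coeff f ^ e * lead_coeff g) k"
    have "a' \<in> C_polys"
      unfolding a'_def using ear(1) less.prems f
      by (intro C_polys_add C_polys_monom C_mult C_power C_polysD)
    moreover have "smult (lead_coeff f ^ Suc e) g = a' * f + r"
    proof -
      have "smult (lead_coeff f ^ Suc e) g
          = smult (lead_coeff f ^ e) (g1 + monom (lead_coeff g) k * f)"
        by (simp add: g1_def mult.commute)
      also have "\<dots> = smult (lead_coeff f ^ e) g1 + monom (lead_coeff f ^ e * lead_coeff g) k * f"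
        by (simp add: smult_add_right smult_monom flip: mult_smult_left)
      also have "\<dots> = a' * f + r"
        using ear(3) by (simp add: a'_def distrib_right)
      finally show ?thesis .
    qed
    ultimately show ?thesis using ear(2,4) by blast
  qed
qed


lemma separating_shrinks:
  assumes f: "f \<in> separating" "0 < degree f" and g: "g \<in> relations" "degree g \<le> degree f"
  shows "\<exists>f'\<in>separating. degree f' < degree f"
proof -
  define f1 where "f1 = smult (lead_coeff g) f - monom (lead_coeff f) (degree f - degree g) * g"
  have fC: "f \<in> C_polys" "poly f t \<in> Q" "poly f t \<notin> P" and gC: "g \<in> C_polys" "poly g t \<in> P"
    "lead_coeff g \<notin> P"
    using f g by (auto simp: separating_def relations_def)
  have "degree f1 < degree f" unfolding f1_def using f g by (intro degree_cancel_lead_less) auto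
  moreover have "f1 \<in> separating"
  proof -
    have rel: "lead_coeff f * t ^ (degree f - degree g) * poly g t \<in> P"
      using P_mult[OF gC(2) B_mult[OF lead_coeff_in_B[OF fC(1)] B_power[OF t_in]]] .
    have eq: "poly f1 t
        = lead_coeff g * poly f t - lead_coeff f * t ^ (degree f - degree g) * poly g t"
      unfolding f1_def by (simp add: poly_monom)
    have "lead_coeff g * poly f t \<notin> P"
      using P_prime[OF lead_coeff_in_B poly_in_B] fC gC by blast
    then have "poly f1 t \<notin> P" using P_add[OF _ rel] eq by fastforce
    moreover have "poly f1 t \<in> Q"
      unfolding eq
      by (rule Q_diff[OF Q_mult[OF fC(2) lead_coeff_in_B[OF gC(1)]] subsetD[OF P_subset rel]])
    moreover have "f1 \<in> C_polys"
      unfolding f1_def using fC gC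
      by (intro C_polys_diff C_polys_smult C_polys_mult C_polys_monom C_polysD)
    ultimately show ?thesis by (simp add: separating_def)
  qed
  ultimately show ?thesis by blast
qed

lemma quotient_value_in_P:
  assumes f: "f \<in> separating" and f_min: "\<And>f'. f' \<in> separating \<Longrightarrow> degree f \<le> degree f'"
    and "poly g t \<in> P" "c \<in> B" and ar: "a \<in> C_polys" "r \<in> C_polys" "degree r < degree f"
    and div: "smult c g = a * f + r"
  shows "poly a t \<in> P"
proof -
  have fC: "f \<in> C_polys" "poly f t \<in> Q" "poly f t \<notin> P" using f by (auto simp: separating_def)
  have cg: "c * poly g t \<in> P" using P_mult[OF \<open>poly g t \<in> P\<close> \<open>c \<in> B\<close>] .
  have eq: "c * poly g t = poly a t * poly f t + poly r t"
    using arg_cong[OF div, of "\<lambda>p. poly p t"] by simp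
  have "poly r t \<in> P"
  proof (rule ccontr)
    assume "poly r t \<notin> P"
    moreover have "poly r t = c * poly g t - poly a t * poly f t"
      using eq by (simp add: algebra_simps)
    then have "poly r t \<in> Q"
      using Q_diff[OF subsetD[OF P_subset cg] Q_mult[OF fC(2) poly_in_B[OF ar(1)]]] by simp
    ultimately have "r \<in> separating" using ar(2) by (simp add: separating_def)
    then show False using f_min ar(3) by (meson leD)
  qed
  moreover have "poly a t * poly f t = c * poly g t - poly r t"
    using eq by (simp add: algebra_simps)
  ultimately have "poly a t * poly f t \<in> P" using P_diff[OF cg] by simp
  then show ?thesis using P_prime[OF poly_in_B[OF ar(1)] poly_in_B[OF fC(1)]] fC(3) by blast
qed

lemma quotient_nonzero_mod_P:
  assumes fg: "f \<in> C_polys" "lead_coeff f \<notin> P" "g \<in> C_polys" "lead_coeff g \<notin> P"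
    and div: "smult (lead_coeff f ^ e) g = a * f + r" "degree r < degree g"
  shows "\<exists>i. coeff a i \<notin> P"
proof (rule ccontr)
  assume "\<nexists>i. coeff a i \<notin> P"
  then have "coeff (a * f) (degree g) \<in> P"
    unfolding coeff_mult using fg(1) C_subset by (auto intro!: P_sum P_mult_right dest: C_polysD)
  moreover have "coeff (a * f) (degree g) = lead_coeff f ^ e * lead_coeff g"
    using arg_cong[OF div(1), of "\<lambda>p. coeff p (degree g)"] div(2) by (simp add: coeff_eq_0)
  moreover have "lead_coeff f ^ e * lead_coeff g \<notin> P"
    using P_prime[OF B_power[OF lead_coeff_in_B[OF fg(1)]] lead_coeff_in_B[OF fg(3)]]
      power_notin_P[OF lead_coeff_in_B[OF fg(1)] fg(2)] fg(4) by blast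
  ultimately show False by simp
qed

lemma degree_quotient_less:
  assumes "a \<in> C_polys" "f \<in> C_polys" "a \<noteq> 0" "lead_coeff f \<noteq> 0" "0 < degree f"
    and div: "smult c g = a * f + r" "degree r < degree g"
  shows "degree a < degree g"
proof -
  have "coeff (a * f) (degree a + degree f) \<noteq> 0"
    using assms(3,4) no_zero_divisors[OF lead_coeff_in_B[OF assms(1)] lead_coeff_in_B[OF assms(2)]]
    by (simp add: coeff_mult_degree_sum)
  then have "degree a + degree f \<le> degree (a * f)" by (rule le_degree)
  also have "\<dots> \<le> degree g"
  proof -
    have "a * f = smult c g - r" using div(1) by simp
    then have "degree (a * f) \<le> max (degree (smult c g)) (degree r)"
      by (metis degree_diff_le_max)
    then show ?thesis using degree_smult_le[of c g] div(2) by linarith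
  qed
  finally show ?thesis using assms(5) by simp
qed

lemma relations_shrink:
  assumes f: "f \<in> separating" "lead_coeff f \<notin> P" "0 < degree f"
    and f_min: "\<And>f'. f' \<in> separating \<Longrightarrow> degree f \<le> degree f'"
    and g: "g \<in> relations" "degree f < degree g"
  shows "\<exists>g'\<in>relations. degree g' < degree g"
proof -
  have fC: "f \<in> C_polys" and gC: "g \<in> C_polys" "poly g t \<in> P" "lead_coeff g \<notin> P"
    using f g by (auto simp: separating_def relations_def)
  obtain e a r where ear: "a \<in> C_polys" "r \<in> C_polys" "smult (lead_coeff f ^ e) g = a * f + r"
    "degree r < degree f"
    using pseudo_division[OF fC f(3) gC(1)] by blast
  have aP: "poly a t \<in> P"
    using quotient_value_in_P[OF f(1) f_min gC(2) B_power[OF lead_coeff_in_B[OF fC]] ear(1,2,4,3)] .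
  have a_nonzero: "\<exists>i. coeff a i \<notin> P"
    using quotient_nonzero_mod_P[OF fC f(2) gC(1,3) ear(3)] ear(4) g(2) by simp
  then have "a \<noteq> 0" "lead_coeff f \<noteq> 0" using f(2) P_zero by auto
  then have "degree a < degree g"
    using degree_quotient_less[OF ear(1) fC _ _ f(3) ear(3)] ear(4) g(2) by simp
  moreover obtain g' where "g' \<in> relations" "degree g' \<le> degree a"
    using relation_of_nonzero[OF ear(1) aP a_nonzero] by blast
  ultimately show ?thesis by (intro bexI) auto
qed

text \<open>Take a separating \<open>f\<close> and a relation \<open>g\<close>, both of least degree. If \<open>deg g \<le> deg f\<close>,
  cancelling the leading term of \<open>f\<close> against \<open>g\<close> gives a separating polynomial of lower
  degree; otherwise pseudo-dividing \<open>g\<close> by \<open>f\<close> gives a relation of lower degree.\<close>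

lemma separated_on_subring:
  assumes g: "g \<in> C_polys" "poly g t \<in> P" "\<exists>i. coeff g i \<notin> P" and h: "h \<in> separating"
  shows "\<exists>c\<in>C. c \<in> Q \<and> c \<notin> P"
proof (rule ccontr)
  assume none: "\<not> ?thesis"
  obtain f0 where f0: "f0 \<in> separating" "\<And>f. f \<in> separating \<Longrightarrow> degree f0 \<le> degree f"
    using ex_has_least_nat[of "\<lambda>f. f \<in> separating" h degree] h by blast
  then obtain f where f: "f \<in> separating" "degree f \<le> degree f0" "degree f = 0 \<or> lead_coeff f \<notin> P"
    using separating_normalize by blast
  have f_min: "degree f \<le> degree f'" if "f' \<in> separating" for f'
    using f0(2)[OF that] f(2) by simp
  have "0 < degree f"
  proof (rule ccontr)
    assume "\<not> 0 < degree f"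
    then have "poly f t = coeff f 0"
      by (metis degree_0_id gr0I poly_0 poly_pCons mult_zero_right add_0_right)
    then show False using none f(1) by (auto simp: separating_def C_polys_def)
  qed
  obtain g0 where "g0 \<in> relations" using relation_of_nonzero[OF g] by blast
  then obtain g1 where g1: "g1 \<in> relations" "\<And>g. g \<in> relations \<Longrightarrow> degree g1 \<le> degree g"
    using ex_has_least_nat[of "\<lambda>g. g \<in> relations" g0 degree] by blast
  show False
  proof (cases "degree g1 \<le> degree f")
    case True
    then show False using separating_shrinks[OF f(1) \<open>0 < degree f\<close> g1(1)] f_min by fastforce
  next
    case False
    then show False
      using relations_shrink[OF f(1) _ \<open>0 < degree f\<close> f_min g1(1)] f(3) \<open>0 < degree f\<close> g1(2)
      by fastforce
  qed
qed

end

lemma sum_single_lookup: "(\<Sum>m\<in>keys p. single m (lookup p m)) = p"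
  by (rule poly_mapping_eqI) (auto simp: lookup_sum lookup_single when_def in_keys_iff)

lemma var_power: "(var j :: ('v, 'k::field) mpoly) ^ n = single (single j n) 1"
  by (induct n) (auto simp: var_def mult_single single_add[symmetric] add.commute)

lemma single_eq_mult_var_power:
  "(single m c :: ('v, 'k::field) mpoly)
    = single (Poly_Mapping.update j 0 m) c * var j ^ lookup m j"
proof -
  have "m = Poly_Mapping.update j 0 m + single j (lookup m j)"
    by (rule poly_mapping_eqI) (simp add: lookup_add lookup_update lookup_single when_def)
  then show ?thesis by (simp add: var_power mult_single flip: \<open>m = _\<close>)
qed

lemma mpoly_as_poly_in_var:
  fixes p :: "('v, 'k::field) mpoly"
  assumes "mvars p \<subseteq> insert j T"
  obtains h where "\<And>i. mvars (coeff h i) \<subseteq> T" "poly h (var j) = p"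
proof
  define h where
    "h = (\<Sum>m\<in>keys p. monom (single (Poly_Mapping.update j 0 m) (lookup p m)) (lookup m j))"
  fix i
  have "mvars (single (Poly_Mapping.update j 0 m) (lookup p m)) \<subseteq> T" if "m \<in> keys p" for m
  proof -
    have "keys m \<subseteq> insert j T" using that assms by (auto simp: mvars_def)
    then show ?thesis
      using mvars_single_subset[of "Poly_Mapping.update j 0 m" "lookup p m"]
      by (auto simp: keys_update)
  qed
  then have
    "mvars (coeff (monom (single (Poly_Mapping.update j 0 m) (lookup p m)) (lookup m j)) i) \<subseteq> T"
    if "m \<in> keys p" for m
    using that by (simp add: coeff_monom)
  then show "mvars (coeff h i) \<subseteq> T"
    unfolding h_def coeff_sum by (intro order_trans[OF mvars_sum] UN_least)
  have "poly h (var j)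
      = (\<Sum>m\<in>keys p. single (Poly_Mapping.update j 0 m) (lookup p m) * var j ^ lookup m j)"
    by (simp add: h_def poly_sum poly_monom)
  then show "poly h (var j) = p" by (simp flip: single_eq_mult_var_power add: sum_single_lookup)
qed

lemma ideal_poly_ringD:
  fixes I :: "('v, 'k::field) mpoly set"
  assumes "ideal I (poly_ring V)"
  shows "p \<in> I \<Longrightarrow> mvars p \<subseteq> V" and "0 \<in> I"
    and "a \<in> I \<Longrightarrow> b \<in> I \<Longrightarrow> a - b \<in> I" and "a \<in> I \<Longrightarrow> mvars x \<subseteq> V \<Longrightarrow> x * a \<in> I"
proof -
  interpret ideal I "poly_ring V" by fact
  show sub: "p \<in> I \<Longrightarrow> mvars p \<subseteq> V" for p using a_subset by auto
  show "0 \<in> I" using additive_subgroup.zero_closed[OF is_additive_subgroup] by simp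
  show "a \<in> I \<Longrightarrow> mvars x \<subseteq> V \<Longrightarrow> x * a \<in> I" using I_l_closed[of a x] by simp
  assume a: "a \<in> I" and b: "b \<in> I"
  have "a \<oplus>\<^bsub>poly_ring V\<^esub> \<ominus>\<^bsub>poly_ring V\<^esub> b \<in> I"
    using additive_subgroup.a_closed[OF is_additive_subgroup a
        additive_subgroup.a_inv_closed[OF is_additive_subgroup b]] .
  then show "a - b \<in> I" using sub[OF b] by simp
qed

lemma incomparability_poly_ring:
  fixes P Q :: "('v, 'k::field) mpoly set"
  assumes P: "primeideal P (poly_ring V)" and Q: "ideal Q (poly_ring V)" and "P \<subseteq> Q"
    and "T \<subseteq> V" "j \<in> V"
  shows "incomparability {p. mvars p \<subseteq> V} {p. mvars p \<subseteq> T} P Q (var j)"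
proof -
  note P_ideal = ideal_poly_ringD[OF primeideal.axioms(1)[OF P]]
    and Q_ideal = ideal_poly_ringD[OF Q]
  have diff: "mvars (a - b) \<subseteq> U" and mult: "mvars (a * b) \<subseteq> U"
    if "mvars a \<subseteq> U" "mvars b \<subseteq> U" for a b :: "('v, 'k) mpoly" and U
    using that mvars_diff[of a b] mvars_mult[of a b] by auto
  show ?thesis
  proof
    fix a b :: "('v, 'k) mpoly"
    show "a \<in> {p. mvars p \<subseteq> V} \<Longrightarrow> b \<in> {p. mvars p \<subseteq> V} \<Longrightarrow> a - b \<in> {p. mvars p \<subseteq> V}"
      "a \<in> {p. mvars p \<subseteq> V} \<Longrightarrow> b \<in> {p. mvars p \<subseteq> V} \<Longrightarrow> a * b \<in> {p. mvars p \<subseteq> V}"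
      "a \<in> {p. mvars p \<subseteq> T} \<Longrightarrow> b \<in> {p. mvars p \<subseteq> T} \<Longrightarrow> a - b \<in> {p. mvars p \<subseteq> T}"
      "a \<in> {p. mvars p \<subseteq> T} \<Longrightarrow> b \<in> {p. mvars p \<subseteq> T} \<Longrightarrow> a * b \<in> {p. mvars p \<subseteq> T}"
      by (simp_all add: diff mult)
    show "a \<in> {p. mvars p \<subseteq> V} \<Longrightarrow> b \<in> {p. mvars p \<subseteq> V} \<Longrightarrow> a \<noteq> 0 \<Longrightarrow> b \<noteq> 0 \<Longrightarrow> a * b \<noteq> 0"
      by (rule mpoly_mult_neq_0)
    show "a \<in> {p. mvars p \<subseteq> V} \<Longrightarrow> b \<in> {p. mvars p \<subseteq> V} \<Longrightarrow> a * b \<in> P \<Longrightarrow> a \<in> P \<or> b \<in> P"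
      using primeideal.I_prime[OF P] by simp
    show "a \<in> P \<Longrightarrow> b \<in> P \<Longrightarrow> a - b \<in> P" "a \<in> Q \<Longrightarrow> b \<in> Q \<Longrightarrow> a - b \<in> Q"
      "a \<in> P \<Longrightarrow> b \<in> {p. mvars p \<subseteq> V} \<Longrightarrow> b * a \<in> P"
      "a \<in> Q \<Longrightarrow> b \<in> {p. mvars p \<subseteq> V} \<Longrightarrow> b * a \<in> Q"
      using P_ideal(3,4) Q_ideal(3,4) by simp_all
  next
    show "1 \<in> {p. mvars p \<subseteq> V}" "1 \<in> {p. mvars p \<subseteq> T}" "0 \<in> P" "P \<subseteq> Q"
      "var j \<in> {p. mvars p \<subseteq> V}" "{p. mvars p \<subseteq> T} \<subseteq> {p. mvars p \<subseteq> V}"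
      "Q \<subseteq> {p. mvars p \<subseteq> V}"
      using assms P_ideal(2) Q_ideal(1) by auto
  qed
qed

text \<open>Each variable outside \<open>S\<close> is algebraic over the others modulo \<open>P\<close>, so the variables
  outside \<open>S\<close> can be eliminated one at a time from an element of \<open>Q - P\<close>.\<close>

lemma separated_on_indep_vars:
  fixes P Q :: "('v, 'k::field) mpoly set"
  assumes "finite V" and P: "primeideal P (poly_ring V)" and Q: "ideal Q (poly_ring V)"
    and PQ: "P \<subseteq> Q" and "S \<subseteq> V"
    and indep: "\<And>p. p \<in> Q \<Longrightarrow> mvars p \<subseteq> S \<Longrightarrow> p = 0"
    and dep: "\<And>j. j \<in> V - S \<Longrightarrow> \<exists>g\<in>P. g \<noteq> 0 \<and> mvars g \<subseteq> insert j S"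
  shows "S \<subseteq> T \<Longrightarrow> T \<subseteq> V \<Longrightarrow> q \<in> Q - P \<Longrightarrow> mvars q \<subseteq> T \<Longrightarrow> \<exists>c\<in>Q - P. mvars c \<subseteq> S"
proof (induction "card (T - S)" arbitrary: T q rule: less_induct)
  case less
  show ?case
  proof (cases "T = S")
    case True
    then show ?thesis using less.prems by blast
  next
    case False
    then obtain j where j: "j \<in> T" "j \<notin> S" using less.prems(1) by blast
    define T' where "T' = T - {j}"
    have T': "S \<subseteq> T'" "T' \<subseteq> V" "T = insert j T'" "j \<in> V"
      using less.prems(1,2) j unfolding T'_def by auto
    have "card (T' - S) < card (T - S)"
      using j less.prems(2) \<open>finite V\<close> unfolding T'_def
      by (metis Diff_insert Diff_insert2 card_Diff1_less finite_Diff DiffI finite_subset)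
    interpret incomparability "{p. mvars p \<subseteq> V}" "{p. mvars p \<subseteq> T'}" P Q "var j"
      by (rule incomparability_poly_ring[OF P Q PQ T'(2,4)])
    obtain h where h: "\<And>i. mvars (coeff h i) \<subseteq> T'" "poly h (var j) = q"
      using mpoly_as_poly_in_var[of q j T'] less.prems(4) T'(3) by blast
    obtain g0 where g0: "g0 \<in> P" "g0 \<noteq> 0" "mvars g0 \<subseteq> insert j S" using dep[of j] j T' by blast
    obtain g where g: "\<And>i. mvars (coeff g i) \<subseteq> S" "poly g (var j) = g0"
      using mpoly_as_poly_in_var[OF g0(3)] by blast
    have "\<exists>i. coeff g i \<notin> P"
    proof (rule ccontr)
      assume "\<nexists>i. coeff g i \<notin> P"
      then have "coeff g i = 0" for i using indep g(1) PQ by blast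
      then show False using g(2) g0(2) by (metis poly_0 poly_eqI coeff_0)
    qed
    moreover have "g \<in> C_polys" using g(1) T'(1) by (auto simp: C_polys_def intro: order_trans)
    moreover have "h \<in> separating" using h less.prems(3) by (auto simp: C_polys_def separating_def)
    ultimately obtain c where "c \<in> Q - P" "mvars c \<subseteq> T'"
      using separated_on_subring[of g h] g(2) g0(1) by auto
    then show ?thesis using less.hyps[OF \<open>card (T' - S) < card (T - S)\<close> T'(1,2)] by blast
  qed
qed

lemma mvars_empty_imp_const:
  assumes "mvars p = {}"
  shows "p = single 0 (lookup p 0)"
proof (rule poly_mapping_eqI)
  fix m
  show "lookup p m = lookup (single 0 (lookup p 0)) m"
  proof (cases "m = 0")
    case False
    then have "m \<notin> keys p" using assms by (auto simp: mvars_def simp flip: keys_eq_empty)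
    then show ?thesis using False by (simp add: in_keys_iff lookup_single)
  qed simp
qed

lemma primeideal_const_eq_0:
  fixes P :: "('v, 'k::field) mpoly set"
  assumes P: "primeideal P (poly_ring V)" and p: "p \<in> P" "mvars p = {}"
  shows "p = 0"
proof (rule ccontr)
  assume "p \<noteq> 0"
  define c where "c = lookup p 0"
  have p_eq: "p = single 0 c" unfolding c_def by (rule mvars_empty_imp_const[OF p(2)])
  with \<open>p \<noteq> 0\<close> have "c \<noteq> 0" by auto
  then have "single 0 (inverse c) * p = 1" using p_eq by (simp add: mult_single)
  moreover have "single 0 (inverse c) * p \<in> P"
    using ideal_poly_ringD(4)[OF primeideal.axioms(1)[OF P] p(1)] by (simp add: mvars_def)
  ultimately have "\<one>\<^bsub>poly_ring V\<^esub> \<in> P" by simp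
  then show False
    using primeideal.I_notcarr[OF P] ideal.one_imp_carrier[OF primeideal.axioms(1)[OF P]] by blast
qed

text \<open>\<open>indep_vars V P S\<close>: the variables in \<open>S\<close> are algebraically independent modulo \<open>P\<close>.\<close>

definition indep_vars :: "'v set \<Rightarrow> ('v, 'k::field) mpoly set \<Rightarrow> 'v set \<Rightarrow> bool" where
  "indep_vars V P S \<longleftrightarrow> S \<subseteq> V \<and> (\<forall>p\<in>P. mvars p \<subseteq> S \<longrightarrow> p = 0)"

definition indep_dim :: "'v set \<Rightarrow> ('v, 'k::field) mpoly set \<Rightarrow> nat" where
  "indep_dim V P = Max {card S | S. indep_vars V P S}"

lemma finite_card_indep_vars: "finite V \<Longrightarrow> finite {card S | S. indep_vars V P S}"
  by (rule finite_subset[of _ "card ` Pow V"]) (auto simp: indep_vars_def)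

lemma card_le_indep_dim: "finite V \<Longrightarrow> indep_vars V P S \<Longrightarrow> card S \<le> indep_dim V P"
  unfolding indep_dim_def by (rule Max_ge[OF finite_card_indep_vars]) auto

lemma obtain_indep_vars_card_eq:
  fixes P :: "('v, 'k::field) mpoly set"
  assumes "finite V" and P: "primeideal P (poly_ring V)"
  obtains S where "indep_vars V P S" "card S = indep_dim V P"
proof -
  have "indep_vars V P {}" using primeideal_const_eq_0[OF P] by (auto simp: indep_vars_def)
  then have "{card S | S. indep_vars V P S} \<noteq> {}" by blast
  from Max_in[OF finite_card_indep_vars[OF \<open>finite V\<close>] this] show ?thesis
    using that unfolding indep_dim_def by auto
qed

lemma indep_dim_psubset:
  fixes P Q :: "('v, 'k::field) mpoly set"
  assumes V: "finite V" and P: "primeideal P (poly_ring V)" and Q: "primeideal Q (poly_ring V)"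
    and PQ: "P \<subset> Q"
  shows "indep_dim V Q < indep_dim V P"
proof (rule ccontr)
  assume "\<not> indep_dim V Q < indep_dim V P"
  obtain S where S: "indep_vars V Q S" "card S = indep_dim V Q"
    using obtain_indep_vars_card_eq[OF V Q] by blast
  then have SV: "S \<subseteq> V" and indep: "\<And>p. p \<in> Q \<Longrightarrow> mvars p \<subseteq> S \<Longrightarrow> p = 0"
    by (auto simp: indep_vars_def)
  have "\<exists>g\<in>P. g \<noteq> 0 \<and> mvars g \<subseteq> insert j S" if j: "j \<in> V - S" for j
  proof (rule ccontr)
    assume "\<not> ?thesis"
    then have "indep_vars V P (insert j S)" using SV j by (auto simp: indep_vars_def)
    then have "card (insert j S) \<le> indep_dim V P" by (rule card_le_indep_dim[OF V])
    then show False
      using \<open>\<not> indep_dim V Q < indep_dim V P\<close> S(2) j finite_subset[OF SV V] by simp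
  qed
  moreover obtain q where "q \<in> Q - P" using PQ by blast
  moreover have "mvars q \<subseteq> V" using ideal_poly_ringD(1)[OF primeideal.axioms(1)[OF Q]] \<open>q \<in> Q - P\<close>
    by blast
  ultimately obtain c where "c \<in> Q - P" "mvars c \<subseteq> S"
    using separated_on_indep_vars[OF V P primeideal.axioms(1)[OF Q] _ SV indep, of V q] PQ SV
    by blast
  then show False using indep ideal_poly_ringD(2)[OF primeideal.axioms(1)[OF P]] by force
qed

lemma prime_chain_le_indep_dim:
  fixes P :: "nat \<Rightarrow> ('v, 'k::field) mpoly set"
  assumes "finite V" and chain: "prime_chain (poly_ring V) P n"
  shows "n \<le> indep_dim V (P 0)"
proof -
  have "indep_dim V (P i) + i \<le> indep_dim V (P 0)" if "i \<le> n" for i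
    using that
  proof (induction i)
    case (Suc i)
    then have "indep_dim V (P (Suc i)) < indep_dim V (P i)"
      using chain by (intro indep_dim_psubset[OF \<open>finite V\<close>]) (auto simp: prime_chain_def)
    then show ?case using Suc by simp
  qed simp
  from this[of n] show ?thesis by simp
qed

lemma indep_dim_le_card_vars_notin:
  fixes P :: "('v, 'k::field) mpoly set"
  assumes "finite V" and P: "primeideal P (poly_ring V)"
  shows "indep_dim V P \<le> card {v \<in> V. (var v :: ('v, 'k) mpoly) \<notin> P}"
proof -
  obtain S where S: "indep_vars V P S" "card S = indep_dim V P"
    using obtain_indep_vars_card_eq[OF assms] by blast
  have "(var v :: ('v, 'k) mpoly) \<notin> P" if "v \<in> S" for v
  proof
    assume "var v \<in> P"
    then have "(var v :: ('v, 'k) mpoly) = 0" using S(1) that by (simp add: indep_vars_def)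
    moreover have "keys (var v :: ('v, 'k) mpoly) \<noteq> {}" by (simp add: keys_var)
    ultimately show False by simp
  qed
  then have "S \<subseteq> {v \<in> V. (var v :: ('v, 'k) mpoly) \<notin> P}" using S(1) by (auto simp: indep_vars_def)
  then have "card S \<le> card {v \<in> V. (var v :: ('v, 'k) mpoly) \<notin> P}"
    by (rule card_mono[rotated]) (use \<open>finite V\<close> in simp)
  then show ?thesis using S(2) by simp
qed

section \<open>Matchings and vertex covers of simplicial forests\<close>

text \<open>The leaf condition of \<open>simplicial_tree\<close>, for indexed families so that single members can
  be shrunk.\<close>

definition hereditary_leaves :: "'i set \<Rightarrow> ('i \<Rightarrow> 'v set) \<Rightarrow> bool" where
  "hereditary_leaves I E \<longleftrightarrow> (\<forall>J\<subseteq>I. J \<noteq> {} \<longrightarrow> (\<exists>F\<in>J. J = {F} \<or>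
      (\<exists>G\<in>J. G \<noteq> F \<and> (\<forall>H\<in>J. H \<noteq> F \<longrightarrow> E F \<inter> E H \<subseteq> E F \<inter> E G))))"

lemma hereditary_leavesD:
  assumes "hereditary_leaves I E" "J \<subseteq> I" "J \<noteq> {}"
  shows "\<exists>F\<in>J. J = {F} \<or> (\<exists>G\<in>J. G \<noteq> F \<and> (\<forall>H\<in>J. H \<noteq> F \<longrightarrow> E F \<inter> E H \<subseteq> E F \<inter> E G))"
  using assms unfolding hereditary_leaves_def by simp

lemma hereditary_leaves_subset: "hereditary_leaves I E \<Longrightarrow> I' \<subseteq> I \<Longrightarrow> hereditary_leaves I' E"
  unfolding hereditary_leaves_def by (intro allI impI) simp

lemma hereditary_leaves_cong:
  assumes "hereditary_leaves I E" "\<And>a b. a \<in> I \<Longrightarrow> b \<in> I \<Longrightarrow> a \<noteq> b \<Longrightarrow> E' a \<inter> E' b = E a \<inter> E b"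
  shows "hereditary_leaves I E'"
  unfolding hereditary_leaves_def
proof (intro allI impI)
  fix J assume J: "J \<subseteq> I" "J \<noteq> {}"
  then obtain F where F: "F \<in> J" "J = {F} \<or>
      (\<exists>G\<in>J. G \<noteq> F \<and> (\<forall>H\<in>J. H \<noteq> F \<longrightarrow> E F \<inter> E H \<subseteq> E F \<inter> E G))"
    using hereditary_leavesD[OF assms(1) J] by auto
  have "J = {F} \<or> (\<exists>G\<in>J. G \<noteq> F \<and> (\<forall>H\<in>J. H \<noteq> F \<longrightarrow> E' F \<inter> E' H \<subseteq> E' F \<inter> E' G))"
    using F(2)
  proof (elim disjE bexE conjE)
    fix G assume "G \<in> J" "G \<noteq> F" "\<forall>H\<in>J. H \<noteq> F \<longrightarrow> E F \<inter> E H \<subseteq> E F \<inter> E G"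
    then show ?thesis using assms(2) J(1) F(1) by (metis subsetD)
  qed simp
  then show "\<exists>F\<in>J. J = {F} \<or> (\<exists>G\<in>J. G \<noteq> F \<and> (\<forall>H\<in>J. H \<noteq> F \<longrightarrow> E' F \<inter> E' H \<subseteq> E' F \<inter> E' G))"
    using F(1) by blast
qed

definition cover_le_matching :: "'i set \<Rightarrow> ('i \<Rightarrow> 'v set) \<Rightarrow> bool" where
  "cover_le_matching I E \<longleftrightarrow> (\<exists>C M. M \<subseteq> I \<and> (\<forall>i\<in>M. \<forall>j\<in>M. i \<noteq> j \<longrightarrow> E i \<inter> E j = {})
     \<and> (\<forall>i\<in>I. E i \<inter> C \<noteq> {}) \<and> finite C \<and> card C \<le> card M)"

lemma cover_le_matching_add_isolated:
  assumes "cover_le_matching (I - {F}) E" "finite I" "F \<in> I" "E F \<noteq> {}"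
    and "\<And>H. H \<in> I \<Longrightarrow> H \<noteq> F \<Longrightarrow> E F \<inter> E H = {}"
  shows "cover_le_matching I E"
proof -
  obtain C M where CM: "M \<subseteq> I - {F}" "\<forall>i\<in>M. \<forall>j\<in>M. i \<noteq> j \<longrightarrow> E i \<inter> E j = {}"
    "\<forall>i\<in>I - {F}. E i \<inter> C \<noteq> {}" "finite C" "card C \<le> card M"
    using assms(1) unfolding cover_le_matching_def by blast
  obtain v where v: "v \<in> E F" using assms(4) by blast
  have "finite M" using CM(1) assms(2) finite_subset by blast
  then have "card (insert v C) \<le> card (insert F M)"
    using CM(1,4,5) by (auto simp: card_insert_if)
  moreover have "\<forall>i\<in>insert F M. \<forall>j\<in>insert F M. i \<noteq> j \<longrightarrow> E i \<inter> E j = {}"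
    using CM(1,2) assms(5) by blast
  moreover have "\<forall>i\<in>I. E i \<inter> insert v C \<noteq> {}" using CM(3) v by blast
  ultimately show ?thesis using CM(1,4) assms(3) unfolding cover_le_matching_def
    by (intro exI[of _ "insert v C"] exI[of _ "insert F M"]) auto
qed

lemma cover_le_matching_add_superset:
  assumes "cover_le_matching (I - {G}) E" "F \<in> I" "F \<noteq> G" "E F \<subseteq> E G"
  shows "cover_le_matching I E"
proof -
  obtain C M where CM: "M \<subseteq> I - {G}" "\<forall>i\<in>M. \<forall>j\<in>M. i \<noteq> j \<longrightarrow> E i \<inter> E j = {}"
    "\<forall>i\<in>I - {G}. E i \<inter> C \<noteq> {}" "finite C" "card C \<le> card M"
    using assms(1) unfolding cover_le_matching_def by blast
  then have "\<forall>i\<in>I. E i \<inter> C \<noteq> {}" using assms(2-4) by blast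
  then show ?thesis using CM unfolding cover_le_matching_def by blast
qed

lemma cover_le_matching_shrink:
  assumes "cover_le_matching I E'" "\<And>i. i \<in> I \<Longrightarrow> E' i \<subseteq> E i"
    and "\<And>a b. a \<in> I \<Longrightarrow> b \<in> I \<Longrightarrow> a \<noteq> b \<Longrightarrow> E' a \<inter> E' b = E a \<inter> E b"
  shows "cover_le_matching I E"
proof -
  obtain C M where CM: "M \<subseteq> I" "\<forall>i\<in>M. \<forall>j\<in>M. i \<noteq> j \<longrightarrow> E' i \<inter> E' j = {}"
    "\<forall>i\<in>I. E' i \<inter> C \<noteq> {}" "finite C" "card C \<le> card M"
    using assms(1) unfolding cover_le_matching_def by blast
  have "\<forall>i\<in>M. \<forall>j\<in>M. i \<noteq> j \<longrightarrow> E i \<inter> E j = {}" using CM(1,2) assms(3) by blast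
  moreover have "\<forall>i\<in>I. E i \<inter> C \<noteq> {}" using CM(3) assms(2) by blast
  ultimately show ?thesis using CM unfolding cover_le_matching_def by blast
qed

lemma hereditary_leaves_cases:
  assumes "hereditary_leaves I E" "I \<noteq> {}"
  obtains (isolated) F where "F \<in> I" "\<And>H. H \<in> I \<Longrightarrow> H \<noteq> F \<Longrightarrow> E F \<inter> E H = {}"
  | (contained) F G where "F \<in> I" "G \<in> I" "G \<noteq> F" "E F \<subseteq> E G"
  | (private_vertex) F v where "F \<in> I" "v \<in> E F" "E F - {v} \<noteq> {}"
      "\<And>H. H \<in> I \<Longrightarrow> H \<noteq> F \<Longrightarrow> v \<notin> E H"
proof -
  obtain F where F: "F \<in> I" "I = {F} \<or>
      (\<exists>G\<in>I. G \<noteq> F \<and> (\<forall>H\<in>I. H \<noteq> F \<longrightarrow> E F \<inter> E H \<subseteq> E F \<inter> E G))"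
    using hereditary_leavesD[OF assms(1) subset_refl assms(2)] by blast
  show thesis
  proof (cases "I = {F}")
    case False
    then obtain G where G: "G \<in> I" "G \<noteq> F"
      "\<And>H. H \<in> I \<Longrightarrow> H \<noteq> F \<Longrightarrow> E F \<inter> E H \<subseteq> E F \<inter> E G"
      using F(2) by blast
    consider "E F \<inter> E G = {}" | "E F \<subseteq> E G" | v where "E F \<inter> E G \<noteq> {}" "v \<in> E F - E G"
      by blast
    then show thesis
    proof cases
      case 1
      then show thesis using isolated[OF F(1)] G(3) by blast
    next
      case 2
      then show thesis using contained[OF F(1) G(1,2)] by blast
    next
      case (3 v)
      then show thesis using private_vertex[OF F(1), of v] G(3) by blast
    qed
  qed (use isolated F(1) in blast)
qed

text \<open>Induction on the total size of the family: a leaf \<open>F\<close> with joint \<open>G\<close> is either isolated,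
  or contained in \<open>G\<close> (then \<open>G\<close> is redundant), or has a vertex in no other member, which can
  be deleted without changing any pairwise intersection.\<close>

lemma hereditary_leaves_cover_le_matching:
  assumes "finite I" "\<And>i. i \<in> I \<Longrightarrow> finite (E i) \<and> E i \<noteq> {}" "hereditary_leaves I E"
  shows "cover_le_matching I E"
  using assms
proof (induction "card I + (\<Sum>i\<in>I. card (E i))" arbitrary: I E rule: less_induct)
  case less
  note fin = less.prems(1) and ne = less.prems(2) and leaves = less.prems(3)
  have smaller: "cover_le_matching (I - {F}) E" if "F \<in> I" for F
  proof -
    have "card (I - {F}) + (\<Sum>i\<in>I - {F}. card (E i)) < card I + (\<Sum>i\<in>I. card (E i))"
      using fin that by (intro add_less_le_mono card_Diff1_less sum_mono2) auto
    then show ?thesis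
      by (rule less.hyps) (use fin ne hereditary_leaves_subset[OF leaves] in auto)
  qed
  show ?case
  proof (cases "I = {}")
    case True
    then show ?thesis unfolding cover_le_matching_def by (intro exI[of _ "{}"]) auto
  next
    case False
    from leaves False show ?thesis
    proof (cases rule: hereditary_leaves_cases)
      case (isolated F)
      then show ?thesis using cover_le_matching_add_isolated[OF smaller fin] ne by blast
    next
      case (contained F G)
      then show ?thesis using cover_le_matching_add_superset[OF smaller[OF \<open>G \<in> I\<close>]] by blast
    next
      case (private_vertex F v)
      define E' where "E' = E(F := E F - {v})"
      have same: "\<And>a b. a \<in> I \<Longrightarrow> b \<in> I \<Longrightarrow> a \<noteq> b \<Longrightarrow> E' a \<inter> E' b = E a \<inter> E b"
        unfolding E'_def using private_vertex(4) by auto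
      have "(\<Sum>i\<in>I. card (E' i)) < (\<Sum>i\<in>I. card (E i))"
      proof (rule sum_strict_mono_ex1[OF fin])
        show "\<forall>i\<in>I. card (E' i) \<le> card (E i)" unfolding E'_def using ne by (auto intro: card_mono)
        show "\<exists>i\<in>I. card (E' i) < card (E i)"
          using private_vertex(1,2) ne[OF private_vertex(1)] unfolding E'_def
          by (intro bexI[of _ F]) (simp add: card_gt_0_iff)
      qed
      moreover have "\<And>i. i \<in> I \<Longrightarrow> finite (E' i) \<and> E' i \<noteq> {}"
        using ne private_vertex(3) unfolding E'_def by auto
      ultimately have "cover_le_matching I E'"
        using less.hyps fin hereditary_leaves_cong[OF leaves same] by simp
      then show ?thesis by (rule cover_le_matching_shrink) (use same in \<open>auto simp: E'_def\<close>)
    qed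
  qed
qed

definition intersect_rel :: "'v set set \<Rightarrow> ('v set \<times> 'v set) set" where
  "intersect_rel Fs = {(A, B). A \<in> Fs \<and> B \<in> Fs \<and> A \<inter> B \<noteq> {}}"

lemma cx_component_reachable:
  assumes "F0 \<in> Fs"
  shows "cx_component Fs {G \<in> Fs. (F0, G) \<in> (intersect_rel Fs)\<^sup>*}" (is "cx_component Fs ?C")
proof -
  have reach: "(F0, G) \<in> (intersect_rel ?C)\<^sup>*" if "(F0, G) \<in> (intersect_rel Fs)\<^sup>*" for G
    using that
  proof (induction rule: rtrancl_induct)
    case (step B D)
    then have "(B, D) \<in> intersect_rel ?C"
      using rtrancl_into_rtrancl[OF step.hyps] by (auto simp: intersect_rel_def)
    with step.IH show ?case by (rule rtrancl_into_rtrancl)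
  qed simp
  have sym: "sym ((intersect_rel ?C)\<^sup>*)"
    by (rule sym_rtrancl) (auto simp: intersect_rel_def sym_def)
  have "(F, G) \<in> (intersect_rel ?C)\<^sup>*" if "F \<in> ?C" "G \<in> ?C" for F G
  proof -
    have "(F0, F) \<in> (intersect_rel ?C)\<^sup>*" "(F0, G) \<in> (intersect_rel ?C)\<^sup>*"
      using that reach by simp_all
    then show ?thesis using rtrancl_trans[OF symD[OF sym]] by blast
  qed
  then have "cx_connected ?C" by (simp add: cx_connected_def intersect_rel_def)
  moreover have "F \<inter> G = {}" if "F \<in> Fs - ?C" "G \<in> ?C" for F G
  proof (rule ccontr)
    assume "F \<inter> G \<noteq> {}"
    then have "(G, F) \<in> intersect_rel Fs" using that by (auto simp: intersect_rel_def)
    moreover have "(F0, G) \<in> (intersect_rel Fs)\<^sup>*" using that(2) by simp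
    ultimately have "(F0, F) \<in> (intersect_rel Fs)\<^sup>*" by (rule rtrancl_into_rtrancl[rotated])
    then show False using that(1) by simp
  qed
  ultimately show ?thesis using assms by (auto simp: cx_component_def)
qed

lemma leaf_of_component_imp_leaf:
  assumes C: "cx_component Fs C" and "Gs \<subseteq> Fs" and L: "is_leaf (Gs \<inter> C) L"
  shows "L \<in> Gs \<and> (Gs = {L} \<or> (\<exists>G\<in>Gs. G \<noteq> L \<and> (\<forall>H\<in>Gs. H \<noteq> L \<longrightarrow> L \<inter> H \<subseteq> L \<inter> G)))"
proof -
  have LGs: "L \<in> Gs" and LC: "L \<in> C" using L by (auto simp: is_leaf_def)
  have outside: "L \<inter> H = {}" if "H \<in> Gs" "H \<notin> C" for H
    using C that \<open>Gs \<subseteq> Fs\<close> LC unfolding cx_component_def by blast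
  show ?thesis
  proof (cases "Gs \<inter> C = {L}")
    case True
    then have "\<forall>H\<in>Gs. H \<noteq> L \<longrightarrow> L \<inter> H = {}" using outside by blast
    then show ?thesis using LGs by blast
  next
    case False
    then obtain G where G: "G \<in> Gs \<inter> C" "G \<noteq> L" "\<forall>H\<in>Gs \<inter> C. H \<noteq> L \<longrightarrow> L \<inter> H \<subseteq> L \<inter> G"
      using L by (auto simp: is_leaf_def)
    then have "\<forall>H\<in>Gs. H \<noteq> L \<longrightarrow> L \<inter> H \<subseteq> L \<inter> G" using outside by blast
    then show ?thesis using LGs G by blast
  qed
qed

lemma simplicial_forest_hereditary_leaves:
  assumes "simplicial_forest Fs"
  shows "hereditary_leaves Fs id"
  unfolding hereditary_leaves_def id_def
proof (intro allI impI)
  fix Gs assume Gs: "Gs \<subseteq> Fs" "Gs \<noteq> {}"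
  then obtain F0 where F0: "F0 \<in> Gs" by blast
  define C where "C = {G \<in> Fs. (F0, G) \<in> (intersect_rel Fs)\<^sup>*}"
  have C: "cx_component Fs C" unfolding C_def using F0 Gs(1) by (intro cx_component_reachable) blast
  then have "simplicial_tree C" using assms by (simp add: simplicial_forest_def)
  moreover have "Gs \<inter> C \<subseteq> C" "Gs \<inter> C \<noteq> {}" using F0 Gs(1) by (auto simp: C_def)
  ultimately obtain L where "is_leaf (Gs \<inter> C) L" unfolding simplicial_tree_def by blast
  from leaf_of_component_imp_leaf[OF C Gs(1) this]
  show "\<exists>F\<in>Gs. Gs = {F} \<or> (\<exists>G\<in>Gs. G \<noteq> F \<and> (\<forall>H\<in>Gs. H \<noteq> F \<longrightarrow> F \<inter> H \<subseteq> F \<inter> G))"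
    by (elim conjE) (rule bexI)
qed

lemma card_matching_le_cover:
  assumes "finite C" "pairwise disjnt M" "\<And>F. F \<in> M \<Longrightarrow> F \<inter> C \<noteq> {}"
  shows "card M \<le> card C"
proof -
  define f where "f F = (SOME v. v \<in> F \<inter> C)" for F
  have f: "f F \<in> F \<inter> C" if "F \<in> M" for F
    unfolding f_def using assms(3)[OF that] by (metis all_not_in_conv someI_ex)
  have "inj_on f M"
  proof (rule inj_onI)
    fix F G assume "F \<in> M" "G \<in> M" "f F = f G"
    then have "F \<inter> G \<noteq> {}" using f[of F] f[of G] by auto
    then show "F = G" using assms(2) \<open>F \<in> M\<close> \<open>G \<in> M\<close> unfolding pairwise_def disjnt_def by auto
  qed
  moreover have "f ` M \<subseteq> C" using f by auto
  ultimately show ?thesis by (rule card_inj_on_le[OF _ _ assms(1)])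
qed

lemma finite_card_matchings: "finite Fs \<Longrightarrow> finite {card M | M. M \<subseteq> Fs \<and> pairwise disjnt M}"
  by (rule finite_subset[of _ "card ` Pow Fs"]) auto

lemma card_le_matching_number:
  "finite Fs \<Longrightarrow> M \<subseteq> Fs \<Longrightarrow> pairwise disjnt M \<Longrightarrow> card M \<le> matching_number Fs"
  unfolding matching_number_def by (rule Max_ge[OF finite_card_matchings]) auto

lemma obtain_maximum_matching:
  assumes "finite Fs"
  obtains M where "M \<subseteq> Fs" "pairwise disjnt M" "card M = matching_number Fs"
proof -
  have "{card M | M. M \<subseteq> Fs \<and> pairwise disjnt M} \<noteq> {}" by auto
  from Max_in[OF finite_card_matchings[OF assms] this] show ?thesis
    using that unfolding matching_number_def by auto
qed

lemma matching_number_le_avoiding_plus_card: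
  assumes "finite Fs" "finite C"
  shows "matching_number Fs \<le> matching_number {F \<in> Fs. F \<inter> C = {}} + card C"
proof -
  obtain M where M: "M \<subseteq> Fs" "pairwise disjnt M" "card M = matching_number Fs"
    using obtain_maximum_matching[OF assms(1)] by blast
  define M_in where "M_in = {F \<in> M. F \<inter> C = {}}"
  have "finite M" using M(1) assms(1) finite_subset by blast
  then have "card M = card M_in + card (M - M_in)"
    unfolding M_in_def by (simp add: card_Diff_subset card_mono)
  moreover have "card M_in \<le> matching_number {F \<in> Fs. F \<inter> C = {}}"
    using M(1,2) assms(1) unfolding M_in_def
    by (intro card_le_matching_number) (auto intro: pairwise_subset)
  moreover have "card (M - M_in) \<le> card C"
    using M(2) assms(2) unfolding M_in_def
    by (intro card_matching_le_cover) (auto intro: pairwise_subset)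
  ultimately show ?thesis using M(3) by linarith
qed

lemma simplicial_forest_cover_eq_matching_number:
  assumes "facet_set Fs" "simplicial_forest Fs"
  obtains C where "C \<subseteq> \<Union>Fs" "finite C" "\<forall>F\<in>Fs. F \<inter> C \<noteq> {}" "card C = matching_number Fs"
proof -
  have fin: "finite Fs" "\<And>F. F \<in> Fs \<Longrightarrow> finite (id F) \<and> id F \<noteq> {}"
    using assms(1) by (auto simp: facet_set_def)
  obtain C M where CM: "M \<subseteq> Fs" "\<forall>F\<in>M. \<forall>G\<in>M. F \<noteq> G \<longrightarrow> F \<inter> G = {}"
    "\<forall>F\<in>Fs. F \<inter> C \<noteq> {}" "finite C" "card C \<le> card M"
    using hereditary_leaves_cover_le_matching[OF fin
        simplicial_forest_hereditary_leaves[OF assms(2)]]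
    unfolding cover_le_matching_def by auto
  define C' where "C' = C \<inter> \<Union>Fs"
  have cover: "\<forall>F\<in>Fs. F \<inter> C' \<noteq> {}" and "finite C'" using CM(3,4) by (auto simp: C'_def)
  have "card C' \<le> card C" using CM(4) by (simp add: C'_def card_mono)
  also have "\<dots> \<le> card M" by (rule CM(5))
  also have "\<dots> \<le> matching_number Fs"
    using CM(1,2) fin(1) by (intro card_le_matching_number) (auto simp: pairwise_def disjnt_def)
  finally have "card C' \<le> matching_number Fs" .
  moreover obtain M0 where M0: "M0 \<subseteq> Fs" "pairwise disjnt M0" "card M0 = matching_number Fs"
    using obtain_maximum_matching[OF fin(1)] by blast
  have "card M0 \<le> card C'"
    using M0(1) cover by (intro card_matching_le_cover[OF \<open>finite C'\<close> M0(2)]) blast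
  ultimately have "card C' = matching_number Fs" using M0(3) by simp
  moreover have "C' \<subseteq> \<Union>Fs" by (simp add: C'_def)
  ultimately show ?thesis using that cover \<open>finite C'\<close> by blast
qed

section \<open>Squarefree monomials in powers of the facet ideal\<close>

definition facet_count :: "'v set list \<Rightarrow> 'v \<Rightarrow> nat" where
  "facet_count Fl v = length (filter (\<lambda>F. v \<in> F) Fl)"

definition divisible_by_facets :: "'v set set \<Rightarrow> nat \<Rightarrow> ('v \<Rightarrow>\<^sub>0 nat) \<Rightarrow> bool" where
  "divisible_by_facets Fs k m \<longleftrightarrow>
     (\<exists>Fl. length Fl = k \<and> set Fl \<subseteq> Fs \<and> (\<forall>v. facet_count Fl v \<le> lookup m v))"

lemma divisible_by_facets_add_right:
  assumes "divisible_by_facets Fs k m"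
  shows "divisible_by_facets Fs k (m + n)"
proof -
  obtain Fl where Fl: "length Fl = k" "set Fl \<subseteq> Fs" "\<forall>v. facet_count Fl v \<le> lookup m v"
    using assms unfolding divisible_by_facets_def by blast
  have "facet_count Fl v \<le> lookup (m + n) v" for v
    using Fl(3)[rule_format, of v] by (simp add: lookup_add)
  then show ?thesis using Fl(1,2) unfolding divisible_by_facets_def by blast
qed

lemma divisible_by_facets_add:
  assumes "divisible_by_facets Fs a m" "divisible_by_facets Fs b n"
  shows "divisible_by_facets Fs (a + b) (m + n)"
proof -
  obtain xs ys where "length xs = a" "set xs \<subseteq> Fs" "\<forall>v. facet_count xs v \<le> lookup m v"
    "length ys = b" "set ys \<subseteq> Fs" "\<forall>v. facet_count ys v \<le> lookup n v"
    using assms unfolding divisible_by_facets_def by blast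
  then show ?thesis unfolding divisible_by_facets_def
    by (intro exI[of _ "xs @ ys"]) (auto simp: facet_count_def lookup_add add_mono)
qed

lemma facet_ideal_subset:
  assumes "facet_set Fs" "\<Union>Fs \<subseteq> V"
  shows "facet_ideal (poly_ring V) Fs
    \<subseteq> (monomial_ideal V (divisible_by_facets Fs 1) :: ('v, 'k::field) mpoly set)"
  unfolding facet_ideal_def
proof (rule ring.genideal_minimal[OF ring_poly_ring])
  show "ideal (monomial_ideal V (divisible_by_facets Fs 1) :: ('v, 'k) mpoly set) (poly_ring V)"
    by (rule monomial_ideal_ideal) (rule divisible_by_facets_add_right)
  show "xmon ` Fs \<subseteq> (monomial_ideal V (divisible_by_facets Fs 1) :: ('v, 'k) mpoly set)"
  proof
    fix x assume "x \<in> (xmon ` Fs :: ('v, 'k) mpoly set)"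
    then obtain F where F: "F \<in> Fs" "x = xmon F" by blast
    have "finite F" using assms(1) F(1) by (auto simp: facet_set_def)
    have "divisible_by_facets Fs 1 (sqfree_monomial F)"
      unfolding divisible_by_facets_def using F(1) \<open>finite F\<close>
      by (intro exI[of _ "[F]"]) (auto simp: facet_count_def lookup_sqfree_monomial)
    then show "x \<in> monomial_ideal V (divisible_by_facets Fs 1)"
      using F mvars_xmon[of F] assms(2) \<open>finite F\<close> by (auto simp: monomial_ideal_def keys_xmon)
  qed
qed

lemma facet_ideal_pow_subset:
  assumes "facet_set Fs" "\<Union>Fs \<subseteq> V"
  shows "ideal_pow (poly_ring V) (facet_ideal (poly_ring V) Fs) k
    \<subseteq> (monomial_ideal V (divisible_by_facets Fs k) :: ('v, 'k::field) mpoly set)"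
proof (induction k)
  case 0
  have "divisible_by_facets Fs 0 m" for m by (simp add: divisible_by_facets_def facet_count_def)
  then show ?case by (auto simp: monomial_ideal_def)
next
  case (Suc k)
  show ?case
  proof
    fix x :: "('v, 'k) mpoly"
    assume "x \<in> ideal_pow (poly_ring V) (facet_ideal (poly_ring V) Fs) (Suc k)"
    then have "x \<in> ideal_prod (poly_ring V) (facet_ideal (poly_ring V) Fs)
        (ideal_pow (poly_ring V) (facet_ideal (poly_ring V) Fs) k)" by simp
    then show "x \<in> monomial_ideal V (divisible_by_facets Fs (Suc k))"
    proof (induction x rule: ideal_prod.induct)
      case (prod i j)
      have "i \<in> monomial_ideal V (divisible_by_facets Fs 1)"
        "j \<in> monomial_ideal V (divisible_by_facets Fs k)"
        using facet_ideal_subset[OF assms] Suc.IH prod.hyps by auto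
      then have "i * j \<in> monomial_ideal V (divisible_by_facets Fs (1 + k))"
        by (rule monomial_ideal_mult[rotated]) (rule divisible_by_facets_add)
      then show ?case by simp
    qed (simp add: monomial_ideal_add)
  qed
qed

lemma xmon_union_disjoint:
  "finite A \<Longrightarrow> finite B \<Longrightarrow> A \<inter> B = {} \<Longrightarrow> xmon (A \<union> B) = (xmon A * xmon B :: ('v, 'k::field) mpoly)"
  unfolding xmon_def by (rule prod.union_disjoint)

lemma xmon_carrier: "S \<subseteq> V \<Longrightarrow> (xmon S :: ('v, 'k::field) mpoly) \<in> carrier (poly_ring V)"
  using mvars_xmon[of S] by auto

lemma facet_count_pos: "F \<in> set Fl \<Longrightarrow> v \<in> F \<Longrightarrow> facet_count Fl v \<ge> 1"
  unfolding facet_count_def by (induct Fl) auto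

lemma facet_count_le_one_imp_disjoint:
  assumes "\<forall>v. facet_count Fl v \<le> 1" "\<forall>F\<in>set Fl. F \<noteq> {}"
  shows "distinct Fl \<and> pairwise disjnt (set Fl)"
  using assms
proof (induction Fl)
  case Nil then show ?case by simp
next
  case (Cons F Fl)
  have c: "facet_count (F # Fl) v = (if v \<in> F then 1 else 0) + facet_count Fl v" for v
    by (simp add: facet_count_def)
  have "\<forall>v. facet_count Fl v \<le> 1"
  proof
    fix v show "facet_count Fl v \<le> 1" using Cons.prems(1) c[of v] by (metis add_leD2)
  qed
  then have IH: "distinct Fl \<and> pairwise disjnt (set Fl)"
    using Cons.IH Cons.prems(2) by simp
  have dis: "disjnt F G" if "G \<in> set Fl" for G
  proof -
    have "v \<notin> G" if "v \<in> F" for v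
    proof
      assume "v \<in> G"
      then have "facet_count Fl v \<ge> 1" using \<open>G \<in> set Fl\<close> by (rule facet_count_pos[rotated])
      moreover have "facet_count (F # Fl) v \<le> 1" using Cons.prems(1) by blast
      ultimately show False using c[of v] \<open>v \<in> F\<close> by simp
    qed
    then show ?thesis unfolding disjnt_def by blast
  qed
  have "F \<notin> set Fl"
  proof
    assume "F \<in> set Fl"
    then have "disjnt F F" by (rule dis)
    then show False using Cons.prems(2) by (simp add: disjnt_def)
  qed
  then show ?case using IH dis by (auto simp: pairwise_insert disjnt_sym)
qed

lemma xmon_in_facet_ideal_pow_imp_matching:
  assumes fs: "facet_set Fs" and V: "\<Union>Fs \<subseteq> V" and S: "finite S"
    and x: "(xmon S :: ('v, 'k::field) mpoly)
      \<in> ideal_pow (poly_ring V) (facet_ideal (poly_ring V) Fs) k"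
  shows "\<exists>M. M \<subseteq> Fs \<and> card M = k \<and> pairwise disjnt M \<and> \<Union>M \<subseteq> S"
proof -
  have "(xmon S :: ('v, 'k::field) mpoly) \<in> monomial_ideal V (divisible_by_facets Fs k)"
    using facet_ideal_pow_subset[OF fs V] x by blast
  then have "divisible_by_facets Fs k (sqfree_monomial S)" using S
    by (simp add: monomial_ideal_def keys_xmon)
  then obtain Fl where Fl: "length Fl = k" "set Fl \<subseteq> Fs"
    "\<forall>v. facet_count Fl v \<le> lookup (sqfree_monomial S) v"
    unfolding divisible_by_facets_def by blast
  have le1: "\<forall>v. facet_count Fl v \<le> 1"
  proof
    fix v have "facet_count Fl v \<le> lookup (sqfree_monomial S) v" using Fl(3) by blast
    also have "\<dots> \<le> 1" using S by (simp add: lookup_sqfree_monomial)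
    finally show "facet_count Fl v \<le> 1" .
  qed
  have nne: "\<forall>F\<in>set Fl. F \<noteq> {}" using Fl(2) fs unfolding facet_set_def by blast
  have dp: "distinct Fl \<and> pairwise disjnt (set Fl)"
    by (rule facet_count_le_one_imp_disjoint[OF le1 nne])
  have sub: "\<Union>(set Fl) \<subseteq> S"
  proof
    fix v assume "v \<in> \<Union>(set Fl)"
    then obtain F where "F \<in> set Fl" "v \<in> F" by blast
    then have "facet_count Fl v \<ge> 1" by (rule facet_count_pos)
    also have "facet_count Fl v \<le> lookup (sqfree_monomial S) v" using Fl(3) by blast
    finally have "lookup (sqfree_monomial S) v \<ge> 1" .
    then show "v \<in> S" using S by (simp add: lookup_sqfree_monomial split: if_splits)
  qed
  show ?thesis using Fl dp sub distinct_card by (intro exI[of _ "set Fl"]) auto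
qed

lemma xmon_matching_in_facet_ideal_pow:
  assumes fs: "facet_set Fs" and V: "\<Union>Fs \<subseteq> V"
    and M: "M \<subseteq> Fs" "pairwise disjnt M"
  shows "(xmon (\<Union>M) :: ('v, 'k::field) mpoly)
    \<in> ideal_pow (poly_ring V) (facet_ideal (poly_ring V) Fs) (card M)"
proof -
  have finFs: "finite Fs" and finF: "\<And>F. F \<in> Fs \<Longrightarrow> finite F" using fs unfolding facet_set_def by auto
  have "finite M" using M(1) finFs finite_subset by blast
  then show ?thesis using M
  proof (induction M rule: finite_induct)
    case empty
    then show ?case by (simp add: xmon_def)
  next
    case (insert F M)
    have F: "F \<in> Fs" using insert by auto
    have IH: "(xmon (\<Union>M) :: ('v, 'k::field) mpoly)
        \<in> ideal_pow (poly_ring V) (facet_ideal (poly_ring V) Fs) (card M)"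
      using insert by (auto simp: pairwise_insert)
    have dj: "F \<inter> \<Union>M = {}" using insert.prems(2) insert.hyps(2) unfolding pairwise_def disjnt_def
      by auto
    have finU: "finite (\<Union>M)" using insert finF by auto
    have "(xmon (\<Union>(insert F M)) :: ('v, 'k::field) mpoly) = xmon F * xmon (\<Union>M)"
      using xmon_union_disjoint[OF finF[OF F] finU dj] by simp
    moreover have "(xmon F :: ('v, 'k::field) mpoly) \<in> facet_ideal (poly_ring V) Fs"
    proof -
      have "xmon ` Fs \<subseteq> carrier (poly_ring V :: ('v, 'k::field) mpoly ring)"
        using V by (intro image_subsetI xmon_carrier) blast
      then show ?thesis unfolding facet_ideal_def using ring.genideal_self[OF ring_poly_ring] F
        by blast
    qed
    ultimately have "(xmon (\<Union>(insert F M)) :: ('v, 'k::field) mpoly)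
        \<in> ideal_prod (poly_ring V) (facet_ideal (poly_ring V) Fs)
                  (ideal_pow (poly_ring V) (facet_ideal (poly_ring V) Fs) (card M))"
      using ideal_prod.prod[where R="poly_ring V" and I="facet_ideal (poly_ring V) Fs"
          and J="ideal_pow (poly_ring V) (facet_ideal (poly_ring V) Fs) (card M)", OF _ IH] by simp
    then show ?case using insert by simp
  qed
qed

section \<open>The dimension of \<open>R/I(\<Delta>)\<^bsup>[k]\<^esup>\<close>\<close>

lemma var_ideal_prime_chain:
  assumes "finite V" "T \<subseteq> V"
  obtains P where "prime_chain (poly_ring V) P (card (V - T))"
    "P 0 = (var_ideal V T :: ('v, 'k::field) mpoly set)"
proof -
  obtain ws where ws: "set ws = V - T" "distinct ws"
    using finite_distinct_list[of "V - T"] assms(1) by blast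
  define P where "P i = (var_ideal V (T \<union> set (take i ws)) :: ('v, 'k) mpoly set)" for i
  have "P i \<subset> P (Suc i)" if "i < length ws" for i
  proof -
    have take: "set (take (Suc i) ws) = insert (ws ! i) (set (take i ws))"
      using that by (simp add: take_Suc_conv_app_nth)
    have "ws ! i \<notin> set (take i ws)"
      using distinct_take[OF ws(2), of "Suc i"] that by (simp add: take_Suc_conv_app_nth)
    moreover have "ws ! i \<in> V - T" using nth_mem[OF that] ws(1) by simp
    ultimately have "(var (ws ! i) :: ('v, 'k) mpoly) \<in> P (Suc i) - P i"
      unfolding P_def take by (simp add: var_in_var_ideal_iff)
    moreover have "P i \<subseteq> P (Suc i)" unfolding P_def take by (intro var_ideal_mono) blast
    ultimately show ?thesis by blast
  qed
  moreover have "primeideal (P i) (poly_ring V)" for i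
    unfolding P_def using assms(2) ws(1) set_take_subset[of i ws] by (intro var_ideal_prime) auto
  moreover have "length ws = card (V - T)" using distinct_card[OF ws(2)] ws(1) by simp
  ultimately show ?thesis using that[of P] by (simp add: prime_chain_def P_def)
qed

lemma sqfree_pow_ideal:
  fixes I :: "('v, 'k::field) mpoly set"
  shows "ideal (sqfree_pow (poly_ring V) V I k) (poly_ring V)"
  unfolding sqfree_pow_def using xmon_carrier
  by (intro ring.genideal_ideal[OF ring_poly_ring]) blast

lemma xmon_in_sqfree_pow:
  fixes I :: "('v, 'k::field) mpoly set"
  assumes "finite S" "S \<subseteq> V" "xmon S \<in> ideal_pow (poly_ring V) I k"
  shows "xmon S \<in> sqfree_pow (poly_ring V) V I k"
  unfolding sqfree_pow_def using assms xmon_carrier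
  by (intro ring.genideal_self[OF ring_poly_ring, THEN subsetD]) blast+

lemma sqfree_pow_subset_var_ideal:
  assumes fs: "facet_set Fs" and V: "\<Union>Fs \<subseteq> V" and "T \<subseteq> V"
    and meets: "\<And>M. M \<subseteq> Fs \<Longrightarrow> pairwise disjnt M \<Longrightarrow> card M = k \<Longrightarrow> \<Union>M \<inter> T \<noteq> {}"
  shows "sqfree_pow (poly_ring V) V (facet_ideal (poly_ring V) Fs) k
    \<subseteq> (var_ideal V T :: ('v, 'k::field) mpoly set)"
  unfolding sqfree_pow_def
proof (intro ring.genideal_minimal[OF ring_poly_ring var_ideal_ideal] subsetI)
  fix x assume "x \<in> {xmon S |S. finite S \<and> S \<subseteq> V \<and>
      (xmon S :: ('v, 'k) mpoly) \<in> ideal_pow (poly_ring V) (facet_ideal (poly_ring V) Fs) k}"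
  then obtain S where S: "x = xmon S" "finite S" "S \<subseteq> V"
    "(xmon S :: ('v, 'k) mpoly) \<in> ideal_pow (poly_ring V) (facet_ideal (poly_ring V) Fs) k"
    by blast
  then have "S \<inter> T \<noteq> {}"
    using xmon_in_facet_ideal_pow_imp_matching[OF fs V S(2,4)] meets by blast
  then show "x \<in> var_ideal V T" using S(1-3) by (simp add: xmon_in_var_ideal)
qed

lemma matching_number_avoiding_prime_less:
  fixes P :: "('v, 'k::field) mpoly set"
  assumes fs: "facet_set Fs" and V: "\<Union>Fs \<subseteq> V" and P: "primeideal P (poly_ring V)"
    and J: "sqfree_pow (poly_ring V) V (facet_ideal (poly_ring V) Fs) k \<subseteq> P"
  shows "matching_number {F \<in> Fs. F \<inter> {v \<in> V. (var v :: ('v, 'k) mpoly) \<in> P} = {}} < k"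
    (is "matching_number ?Fs < k")
proof (rule ccontr)
  assume "\<not> ?thesis"
  have "finite Fs" "\<And>F. F \<in> Fs \<Longrightarrow> finite F" using fs by (auto simp: facet_set_def)
  then obtain M where M: "M \<subseteq> ?Fs" "pairwise disjnt M" "card M = matching_number ?Fs"
    using obtain_maximum_matching[of ?Fs] by auto
  with \<open>\<not> ?thesis\<close> obtain M' where M': "M' \<subseteq> M" "card M' = k"
    by (metis not_less obtain_subset_with_card_n)
  have "M' \<subseteq> Fs" "pairwise disjnt M'" using M M' by (auto intro: pairwise_subset)
  then have "(xmon (\<Union>M') :: ('v, 'k) mpoly)
      \<in> ideal_pow (poly_ring V) (facet_ideal (poly_ring V) Fs) k"
    using xmon_matching_in_facet_ideal_pow[OF fs V] M'(2) by blast
  moreover have "finite (\<Union>M')" "\<Union>M' \<subseteq> V"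
    using \<open>M' \<subseteq> Fs\<close> \<open>finite Fs\<close> \<open>\<And>F. F \<in> Fs \<Longrightarrow> finite F\<close> V by (auto intro: finite_subset)
  ultimately have "(xmon (\<Union>M') :: ('v, 'k) mpoly) \<in> P"
    using J xmon_in_sqfree_pow by blast
  then obtain v where "v \<in> \<Union>M'" "(var v :: ('v, 'k) mpoly) \<in> P"
    using primeideal_xmon_imp_var[OF P \<open>finite (\<Union>M')\<close> \<open>\<Union>M' \<subseteq> V\<close>] by blast
  then show False using M(1) M'(1) \<open>\<Union>M' \<subseteq> V\<close> by blast
qed

lemma matching_number_le_card:
  assumes "facet_set Fs" "\<Union>Fs \<subseteq> V" "finite V"
  shows "matching_number Fs \<le> card V"
proof -
  have "finite Fs" using assms(1) by (simp add: facet_set_def)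
  then obtain M where M: "M \<subseteq> Fs" "pairwise disjnt M" "card M = matching_number Fs"
    by (rule obtain_maximum_matching)
  have "F \<inter> V \<noteq> {}" if "F \<in> M" for F
  proof -
    have "F \<in> Fs" using that M(1) by blast
    then have "F \<noteq> {}" "F \<subseteq> V" using assms(1,2) by (auto simp: facet_set_def)
    then show ?thesis by blast
  qed
  then have "card M \<le> card V" by (rule card_matching_le_cover[OF assms(3) M(2)])
  then show ?thesis using M(3) by simp
qed

lemma prime_chain_over_sqfree_pow_le:
  fixes P :: "nat \<Rightarrow> ('v, 'k::field) mpoly set"
  assumes fs: "facet_set Fs" and V: "finite V" "\<Union>Fs \<subseteq> V"
    and chain: "prime_chain (poly_ring V) P n"
    and J: "sqfree_pow (poly_ring V) V (facet_ideal (poly_ring V) Fs) k \<subseteq> P 0"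
  shows "n \<le> card V - matching_number Fs + k - 1"
proof -
  define C where "C = {v \<in> V. (var v :: ('v, 'k) mpoly) \<in> P 0}"
  have P0: "primeideal (P 0) (poly_ring V)" using chain by (simp add: prime_chain_def)
  have "n \<le> indep_dim V (P 0)" by (rule prime_chain_le_indep_dim[OF V(1) chain])
  also have "\<dots> \<le> card {v \<in> V. (var v :: ('v, 'k) mpoly) \<notin> P 0}"
    by (rule indep_dim_le_card_vars_notin[OF V(1) P0])
  also have "{v \<in> V. (var v :: ('v, 'k) mpoly) \<notin> P 0} = V - C" by (auto simp: C_def)
  finally have "n \<le> card V - card C" using V(1) by (simp add: C_def card_Diff_subset)
  moreover have "matching_number Fs \<le> matching_number {F \<in> Fs. F \<inter> C = {}} + card C"
    using fs V(1) by (intro matching_number_le_avoiding_plus_card) (auto simp: C_def facet_set_def)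
  moreover have "matching_number {F \<in> Fs. F \<inter> C = {}} < k"
    unfolding C_def by (rule matching_number_avoiding_prime_less[OF fs V(2) P0 J])
  moreover have "card C \<le> card V" using V(1) by (simp add: C_def card_mono)
  ultimately show ?thesis using matching_number_le_card[OF fs V(2,1)] by linarith
qed

lemma prime_chain_over_sqfree_pow_exists:
  assumes fs: "facet_set Fs" and forest: "simplicial_forest Fs" and V: "finite V" "\<Union>Fs \<subseteq> V"
    and k: "1 \<le> k" "k \<le> matching_number Fs"
  obtains P :: "nat \<Rightarrow> ('v, 'k::field) mpoly set"
  where "prime_chain (poly_ring V) P (card V - matching_number Fs + k - 1)"
    "sqfree_pow (poly_ring V) V (facet_ideal (poly_ring V) Fs) k \<subseteq> P 0"
proof -
  obtain C where C: "C \<subseteq> \<Union>Fs" "finite C" "\<forall>F\<in>Fs. F \<inter> C \<noteq> {}" "card C = matching_number Fs"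
    using simplicial_forest_cover_eq_matching_number[OF fs forest] by blast
  have "k - 1 \<le> card C" using C(4) k(2) by simp
  then obtain D where D: "D \<subseteq> C" "card D = k - 1" by (rule obtain_subset_with_card_n)
  have "finite D" using D(1) C(2) finite_subset by blast
  have meets: "\<Union>M \<inter> (C - D) \<noteq> {}" if M: "M \<subseteq> Fs" "pairwise disjnt M" "card M = k" for M
  proof
    assume "\<Union>M \<inter> (C - D) = {}"
    then have "F \<inter> D \<noteq> {}" if "F \<in> M" for F using that M(1) C(3) by blast
    then have "card M \<le> card D" by (rule card_matching_le_cover[OF \<open>finite D\<close> M(2)])
    then show False using M(3) D(2) k(1) by simp
  qed
  have "card (V - (C - D)) = card V - matching_number Fs + k - 1"
  proof -
    have "card (C - D) = matching_number Fs - (k - 1)" using C(4) D \<open>finite D\<close>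
      by (simp add: card_Diff_subset)
    moreover have "card (V - (C - D)) = card V - card (C - D)"
      using C(1) V by (intro card_Diff_subset) (auto intro: finite_subset)
    ultimately show ?thesis using k matching_number_le_card[OF fs V(2,1)] by simp
  qed
  moreover obtain P :: "nat \<Rightarrow> ('v, 'k) mpoly set"
    where "prime_chain (poly_ring V) P (card (V - (C - D)))" "P 0 = var_ideal V (C - D)"
    using var_ideal_prime_chain[OF V(1), of "C - D"] C(1) V(2) by blast
  moreover have "sqfree_pow (poly_ring V) V (facet_ideal (poly_ring V) Fs) k
      \<subseteq> (var_ideal V (C - D) :: ('v, 'k) mpoly set)"
    using C(1) V(2) by (intro sqfree_pow_subset_var_ideal[OF fs V(2)] meets) auto
  ultimately show ?thesis using that by auto
qed

lemma krull_dim_Quot_sqfree_pow_facet_ideal: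
  fixes Fs :: "'v set set"
  assumes fs: "facet_set Fs" and forest: "simplicial_forest Fs" and V: "finite V" "\<Union>Fs \<subseteq> V"
    and k: "1 \<le> k" "k \<le> matching_number Fs"
  shows "krull_dim ((poly_ring V :: ('v, 'k::field) mpoly ring)
      Quot sqfree_pow (poly_ring V) V (facet_ideal (poly_ring V) Fs) k)
    = enat (card V - matching_number Fs + k - 1)"
proof (rule cring.krull_dim_Quot_eqI[OF cring_poly_ring sqfree_pow_ideal])
  show "n \<le> card V - matching_number Fs + k - 1"
    if "prime_chain (poly_ring V) P n"
      "sqfree_pow (poly_ring V) V (facet_ideal (poly_ring V) Fs) k \<subseteq> P 0"
    for P :: "nat \<Rightarrow> ('v, 'k) mpoly set" and n
    using prime_chain_over_sqfree_pow_le[OF fs V that] .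
  show "\<exists>P. prime_chain (poly_ring V) P (card V - matching_number Fs + k - 1)
      \<and> sqfree_pow (poly_ring V) V (facet_ideal (poly_ring V) Fs) k \<subseteq> P 0"
    using prime_chain_over_sqfree_pow_exists[OF fs forest V k] by metis
qed

theorem theorem3p5:
  fixes Fs :: "'v set set" and R :: "('v, 'k::field) mpoly ring" and k :: nat
  assumes "facet_set Fs"
    and "finite (vertices Fs)"
    and "simplicial_forest Fs"
    and "R = poly_ring (vertices Fs)"
    and "cohen_macaulay_quot R (vertices Fs) (facet_ideal R Fs)"
    and "1 \<le> k" and "k \<le> matching_number Fs"
  shows "krull_dim (R Quot sqfree_pow R (vertices Fs) (facet_ideal R Fs) k)
           = enat (card (vertices Fs) - matching_number Fs + k - 1)"
  unfolding assms(4)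
  by (rule krull_dim_Quot_sqfree_pow_facet_ideal[OF assms(1,3,2) _ assms(6,7)])
    (simp add: vertices_def)

end
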